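(* Fix $\beta>0$. Let $(\tilde s_i,\tilde a_i,\tilde s_i')_{i\ge0}$ be random samples with $\tilde s_i,\tilde s_i'\in\mathcal S$, $\tilde a_i\in\mathcal A$, and $(\tilde\eta_i)_{i\ge0}$ nonnegative random step sizes, such that almost surely, for all $s'\in\mathcal S$ and $i\in\mathbb N$, $\mathbb P[\tilde s_i'=s'\mid\mathcal G_{i-1},\tilde s_i,\tilde a_i,\tilde\eta_i]=p(\tilde s_i,\tilde a_i,s')$, where $\mathcal G_{i-1}=(\tilde\eta_l,(\tilde s_l,\tilde a_l,\tilde s_l'))_{l=0}^{i-1}$; and such that for each $(s,a)\in\mathcal S\times\mathcal A$, $\sum_{i:(\tilde s_i,\tilde a_i)=(s,a)}\tilde\eta_i=\infty$ and $\sum_{i:(\tilde s_i,\tilde a_i)=(s,a)}\tilde\eta_i^2<\infty$ almost surely. Define iterates $\tilde q_i\in\mathbb R^{\mathcal S\times\mathcal A}$ by $\tilde q_0\equiv0$ and, for $i\ge0$, $\tilde z_i=r(\tilde s_i,\tilde a_i,\tilde s_i')+\max_{a'\in\mathcal A}\tilde q_i(\tilde s_i',a')-\tilde q_i(\tilde s_i,\tilde a_i)$, $\tilde q_{i+1}(\tilde s_i,\tilde a_i)=\tilde q_i(\tilde s_i,\tilde a_i)-\tilde\eta_i\,(e^{-\beta\tilde z_i}-1)$, and $\tilde q_{i+1}(s,a)=\tilde q_i(s,a)$ for $(s,a)\ne(\tilde s_i,\tilde a_i)$. If there are constants $z_{\min}\le z_{\max}$ with $\tilde z_i\in[z_{\min},z_{\max}]$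 for all $i$ almost surely, then $(\tilde q_i)$ converges almost surely to some $q_\infty$ satisfying $q_\infty=\hat B_\beta q_\infty$.
   Context: Setting: a finite MDP with state set $\mathcal S=\{1,\dots,S,e\}$, sink $e$ with $p(e,a,e)=1$, $r(e,a,e)=0$, finite action set $\mathcal A$, transition probabilities $p(s,a,s')$, rewards $r(s,a,s')$, transient under every stationary deterministic policy. $\ell_\beta(z)=\beta^{-1}(e^{-\beta z}-1)+z$ and $(\hat B_\beta q)(s,a)=\operatorname*{argmin}_{y\in\mathbb R}\mathbb E^{s,a}\big[\ell_\beta\big(r(s,a,\tilde s_1)+\max_{a'\in\mathcal A}q(\tilde s_1,a')-y\big)\big]$ with $\tilde s_1\sim p(s,a,\cdot)$. *)

theory Defs
  imports "HOL-Probability.Probability"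
begin

definition ell :: "real \<Rightarrow> real \<Rightarrow> real" where
  "ell \<beta> z = (exp (- \<beta> * z) - 1) / \<beta> + z"

definition exp_loss ::
  "real \<Rightarrow> ('s::finite \<Rightarrow> 'a::finite \<Rightarrow> 's \<Rightarrow> real) \<Rightarrow> ('s \<Rightarrow> 'a \<Rightarrow> 's \<Rightarrow> real)
    \<Rightarrow> ('s \<Rightarrow> 'a \<Rightarrow> real) \<Rightarrow> 's \<Rightarrow> 'a \<Rightarrow> real \<Rightarrow> real" where
  "exp_loss \<beta> p r q s a y =
     (\<Sum>s1\<in>UNIV. p s a s1 * ell \<beta> (r s a s1 + Max (range (q s1)) - y))"

definition Bhat ::
  "real \<Rightarrow> ('s::finite \<Rightarrow> 'a::finite \<Rightarrow> 's \<Rightarrow> real) \<Rightarrow> ('s \<Rightarrow> 'a \<Rightarrow> 's \<Rightarrow> real)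
    \<Rightarrow> ('s \<Rightarrow> 'a \<Rightarrow> real) \<Rightarrow> 's \<Rightarrow> 'a \<Rightarrow> real" where
  "Bhat \<beta> p r q s a =
     (THE y. \<forall>y'. exp_loss \<beta> p r q s a y \<le> exp_loss \<beta> p r q s a y')"

primrec nstep :: "('s::finite \<Rightarrow> 'a \<Rightarrow> 's \<Rightarrow> real) \<Rightarrow> ('s \<Rightarrow> 'a) \<Rightarrow> nat \<Rightarrow> 's \<Rightarrow> 's \<Rightarrow> real" where
  "nstep p \<pi> 0 s t = (if s = t then 1 else 0)"
| "nstep p \<pi> (Suc n) s t = (\<Sum>u\<in>UNIV. nstep p \<pi> n s u * p u (\<pi> u) t)"

definition transient_mdp ::
  "('s::finite \<Rightarrow> 'a::finite \<Rightarrow> 's \<Rightarrow> real) \<Rightarrow> ('s \<Rightarrow> 'a \<Rightarrow> 's \<Rightarrow> real) \<Rightarrow> 's \<Rightarrow> bool" where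
  "transient_mdp p r e \<longleftrightarrow>
     (\<forall>s a s'. 0 \<le> p s a s') \<and>
     (\<forall>s a. (\<Sum>s'\<in>UNIV. p s a s') = 1) \<and>
     (\<forall>a. p e a e = 1 \<and> r e a e = 0) \<and>
     (\<forall>\<pi> s. (\<lambda>n. nstep p \<pi> n s e) \<longlonglongrightarrow> 1)"

text \<open>The sigma-algebra generated by G_{i-1} = (eta_l,(s_l,a_l,s'_l))_{l<i} together with
  s_i, a_i, eta_i.\<close>
definition hist_sigma ::
  "'w measure \<Rightarrow> (nat \<Rightarrow> 'w \<Rightarrow> real) \<Rightarrow> (nat \<Rightarrow> 'w \<Rightarrow> 's) \<Rightarrow> (nat \<Rightarrow> 'w \<Rightarrow> 'a)
    \<Rightarrow> (nat \<Rightarrow> 'w \<Rightarrow> 's) \<Rightarrow> nat \<Rightarrow> 'w measure" where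
  "hist_sigma M \<eta> S A S' i = sigma (space M)
     ({\<eta> l -` B \<inter> space M | l B. l \<le> i \<and> B \<in> sets borel}
      \<union> {S l -` B \<inter> space M | l B. l \<le> i}
      \<union> {A l -` B \<inter> space M | l B. l \<le> i}
      \<union> {S' l -` B \<inter> space M | l B. l < i})"

primrec qit ::
  "real \<Rightarrow> ('s::finite \<Rightarrow> 'a::finite \<Rightarrow> 's \<Rightarrow> real) \<Rightarrow> (nat \<Rightarrow> 'w \<Rightarrow> real) \<Rightarrow> (nat \<Rightarrow> 'w \<Rightarrow> 's)
    \<Rightarrow> (nat \<Rightarrow> 'w \<Rightarrow> 'a) \<Rightarrow> (nat \<Rightarrow> 'w \<Rightarrow> 's) \<Rightarrow> nat \<Rightarrow> 'w \<Rightarrow> 's \<Rightarrow> 'a \<Rightarrow> real" where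
  "qit \<beta> r \<eta> S A S' 0 w = (\<lambda>s a. 0)"
| "qit \<beta> r \<eta> S A S' (Suc i) w =
     (let q = qit \<beta> r \<eta> S A S' i w;
          z = r (S i w) (A i w) (S' i w) + Max (range (q (S' i w))) - q (S i w) (A i w)
      in (\<lambda>s a. if (s, a) = (S i w, A i w)
                 then q s a - \<eta> i w * (exp (- \<beta> * z) - 1) else q s a))"

definition zit ::
  "real \<Rightarrow> ('s::finite \<Rightarrow> 'a::finite \<Rightarrow> 's \<Rightarrow> real) \<Rightarrow> (nat \<Rightarrow> 'w \<Rightarrow> real) \<Rightarrow> (nat \<Rightarrow> 'w \<Rightarrow> 's)
    \<Rightarrow> (nat \<Rightarrow> 'w \<Rightarrow> 'a) \<Rightarrow> (nat \<Rightarrow> 'w \<Rightarrow> 's) \<Rightarrow> nat \<Rightarrow> 'w \<Rightarrow> real" where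
  "zit \<beta> r \<eta> S A S' i w =
     (let q = qit \<beta> r \<eta> S A S' i w
      in r (S i w) (A i w) (S' i w) + Max (range (q (S' i w))) - q (S i w) (A i w))"

end

theory Submission
  imports Defs
begin

(* The iteration is a stochastic approximation of the soft Bellman operator
   T q (s, a) = - ln E [exp (- beta (r + max q (s')))] / beta, which is what Bhat computes.
   Each update moves q (s, a) by eta (1 - E [exp (- beta z) | past]) plus eta times a bounded
   martingale difference; since the squared step sizes are summable, Kolmogorov's maximal
   inequality (after truncating the random weights) makes the accumulated noise converge almost
   surely.  On every such path the iterates stay bounded, by induction over the sets of states
   from which every policy reaches the sink with positive probability, and their limsup and
   liminf are a sub- and a super-solution of q = T q.  A comparison principle, which is where
   transience enters, forces both to equal the unique fixed point vanishing at the sink. *)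

section \<open>Perturbed contractions of real sequences\<close>

lemma contraction_tendsto_zero:
  fixes U a :: "nat \<Rightarrow> real"
  assumes U_nonneg: "\<And>n. n \<ge> N \<Longrightarrow> 0 \<le> U n"
    and U_Suc: "\<And>n. n \<ge> N \<Longrightarrow> U (Suc n) \<le> (1 - a n) * U n"
    and a_bounds: "\<And>n. n \<ge> N \<Longrightarrow> 0 \<le> a n \<and> a n \<le> 1"
    and a_not_summable: "\<not> summable a"
  shows "U \<longlonglongrightarrow> 0"
proof -
  define V where "V n = U (n + N)" for n
  have V_nonneg: "0 \<le> V n" for n using U_nonneg by (simp add: V_def)
  have V_Suc: "V (Suc n) \<le> (1 - a (n + N)) * V n" for n
    using U_Suc[of "n + N"] by (simp add: V_def)
  have "decseq V"
  proof (rule decseq_SucI)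
    fix n
    have "(1 - a (n + N)) * V n \<le> V n"
      using a_bounds[of "n + N"] V_nonneg[of n] by (simp add: mult_left_le_one_le)
    then show "V (Suc n) \<le> V n" using V_Suc[of n] by linarith
  qed
  then obtain L where L: "V \<longlonglongrightarrow> L" "\<And>n. L \<le> V n"
    using decseq_convergent[of V 0] V_nonneg by blast
  have "L = 0"
  proof (rule ccontr)
    assume "L \<noteq> 0"
    then have L_pos: "L > 0" using LIMSEQ_le_const[OF L(1), of 0] V_nonneg by force
    \<comment> \<open>once \<open>V \<ge> L > 0\<close>, every step removes at least \<open>a n * L\<close>, and the removals telescope\<close>
    have "norm (a (n + N)) \<le> (V n - V (Suc n)) / L" for n
    proof -
      have "a (n + N) * L \<le> a (n + N) * V n"
        using a_bounds[of "n + N"] L(2)[of n] by (simp add: mult_left_mono)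
      then have "a (n + N) * L \<le> V n - V (Suc n)" using V_Suc[of n] by (simp add: algebra_simps)
      then show ?thesis using a_bounds[of "n + N"] L_pos by (simp add: field_simps)
    qed
    then have "summable (\<lambda>n. a (n + N))"
      by (rule summable_comparison_test'[OF summable_divide[OF telescope_summable'[OF L(1)]]])
    with a_not_summable show False by (simp add: summable_iff_shift)
  qed
  with L(1) have "(\<lambda>n. U (n + N)) \<longlonglongrightarrow> 0" by (simp add: V_def[abs_def])
  then show ?thesis by (rule LIMSEQ_offset)
qed

lemma eventually_lt_of_damped_contraction:
  fixes V a :: "nat \<Rightarrow> real"
  assumes a_bounds: "\<And>n. n \<ge> N \<Longrightarrow> 0 \<le> a n \<and> a n \<le> 1" and "\<not> summable a" and "d > 0"
    and V_Suc: "\<And>n. n \<ge> N \<Longrightarrow> V (Suc n) \<le> (1 - a n) * max (V n) d + a n * d"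
  shows "eventually (\<lambda>n. V n < 2 * d) sequentially"
proof -
  define U where "U n = max (V n) d - d" for n
  have "U \<longlonglongrightarrow> 0"
  proof (rule contraction_tendsto_zero[where N = N and a = a])
    fix n assume n: "n \<ge> N"
    show "0 \<le> U n" by (simp add: U_def)
    show "0 \<le> a n \<and> a n \<le> 1" by (rule a_bounds[OF n])
    have "V (Suc n) - d \<le> (1 - a n) * U n" using V_Suc[OF n] by (simp add: U_def algebra_simps)
    moreover have "0 \<le> (1 - a n) * U n" using a_bounds[OF n] by (simp add: U_def)
    ultimately show "U (Suc n) \<le> (1 - a n) * U n" by (simp add: U_def)
  qed (rule assms(2))
  then have "eventually (\<lambda>n. U n < d) sequentially" using \<open>d > 0\<close> by (simp add: order_tendsto_iff)
  then show ?thesis by eventually_elim (simp add: U_def)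
qed

lemma eventually_le_of_perturbed_contraction:
  fixes Y a b :: "nat \<Rightarrow> real"
  assumes a_nonneg: "\<And>n. 0 \<le> a n" and a_le_1: "eventually (\<lambda>n. a n \<le> 1) sequentially"
    and a_not_summable: "\<not> summable a" and b_summable: "summable b"
    and Y_Suc: "eventually (\<lambda>n. Y (Suc n) \<le> (1 - a n) * max (Y n) 0 + b n) sequentially"
    and \<delta>_pos: "\<delta> > 0"
  shows "eventually (\<lambda>n. Y n \<le> \<delta>) sequentially"
proof -
  define R where "R n = (\<Sum>k. b (k + n))" for n
  have R_Suc: "R n = b n + R (Suc n)" for n
    using suminf_split_head[of "\<lambda>k. b (k + n)"] b_summable
    by (simp add: R_def summable_iff_shift)
  define d where "d = \<delta> / 3"
  have d_pos: "d > 0" using \<delta>_pos by (simp add: d_def)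
  have "R \<longlonglongrightarrow> 0"
    using suminf_exist_split2[OF b_summable] by (simp add: R_def[abs_def])
  then have R_small: "eventually (\<lambda>n. \<bar>R n\<bar> < d) sequentially"
    using d_pos by (rule order_tendstoD(2)[OF tendsto_rabs_zero])
  then obtain N where N: "\<And>n. n \<ge> N \<Longrightarrow>
      \<bar>R n\<bar> < d \<and> a n \<le> 1 \<and> Y (Suc n) \<le> (1 - a n) * max (Y n) 0 + b n"
    using a_le_1 Y_Suc unfolding eventually_sequentially by (metis le_trans nat_le_linear)
  \<comment> \<open>adding the tail of \<open>\<Sum> b\<close> turns the additive perturbation into one that is damped by \<open>a n\<close>\<close>
  have "eventually (\<lambda>n. Y n + R n < 2 * d) sequentially"
  proof (rule eventually_lt_of_damped_contraction[OF _ a_not_summable d_pos, where N = N])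
    fix n assume n: "n \<ge> N"
    show a_n: "0 \<le> a n \<and> a n \<le> 1" using a_nonneg N[OF n] by simp
    have "Y (Suc n) + R (Suc n) \<le> (1 - a n) * (max (Y n) 0 + R n) + a n * R n"
      using N[OF n] R_Suc[of n] by (simp add: algebra_simps)
    also have "\<dots> \<le> (1 - a n) * max (Y n + R n) d + a n * d"
      using a_n N[OF n] by (intro add_mono mult_left_mono) auto
    finally show "Y (Suc n) + R (Suc n) \<le> (1 - a n) * max (Y n + R n) d + a n * d" .
  qed
  with R_small show ?thesis by eventually_elim (simp add: d_def)
qed

lemma upper_update_contracts:
  fixes D \<eta> h \<beta> :: real
  assumes "exp (\<beta> * D) \<le> h" and "0 \<le> \<eta>" and "\<beta> * \<eta> \<le> 1"
  shows "D + \<eta> * (1 - h) \<le> (1 - \<beta> * \<eta>) * max D 0"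
proof -
  have "1 - h \<le> - (\<beta> * D)" using assms(1) exp_ge_add_one_self[of "\<beta> * D"] by linarith
  then have "\<eta> * (1 - h) \<le> \<eta> * (- (\<beta> * D))" using assms(2) by (rule mult_left_mono)
  then have "D + \<eta> * (1 - h) \<le> (1 - \<beta> * \<eta>) * D" by (simp add: algebra_simps)
  also have "\<dots> \<le> (1 - \<beta> * \<eta>) * max D 0" using assms(3) by (intro mult_left_mono) auto
  finally show ?thesis .
qed

lemma lower_update_contracts:
  fixes Y \<eta> h \<beta> B :: real
  assumes h: "h \<le> exp (- \<beta> * Y)" and \<eta>_nonneg: "0 \<le> \<eta>" and \<beta>_pos: "\<beta> > 0"
    and Y_bound: "\<bar>Y\<bar> \<le> B" and \<eta>_small: "\<eta> * \<beta> * exp (\<beta> * B) \<le> 1"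
  shows "Y - \<eta> * (1 - h) \<le> (1 - \<beta> * exp (- \<beta> * B) * \<eta>) * max Y 0"
proof -
  have "Y - \<eta> * (1 - h) \<le> Y + \<eta> * (exp (- \<beta> * Y) - 1)"
    using h \<eta>_nonneg by (simp add: algebra_simps mult_left_mono)
  also have "\<dots> \<le> (1 - \<beta> * exp (- \<beta> * B) * \<eta>) * max Y 0"
  proof (cases "Y \<ge> 0")
    case True
    \<comment> \<open>\<open>1 - exp (-t) \<ge> t exp (-t)\<close> for \<open>t = \<beta> Y\<close>, and \<open>exp (- \<beta> Y) \<ge> exp (- \<beta> B)\<close>\<close>
    have "\<beta> * Y \<le> exp (\<beta> * Y) - 1" using exp_ge_add_one_self[of "\<beta> * Y"] by linarith
    then have "exp (- \<beta> * Y) * (\<beta> * Y) \<le> exp (- \<beta> * Y) * (exp (\<beta> * Y) - 1)"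
      by (rule mult_left_mono) simp
    then have "exp (- \<beta> * Y) * (\<beta> * Y) \<le> 1 - exp (- \<beta> * Y)"
      by (simp add: algebra_simps flip: exp_add)
    moreover have "exp (- \<beta> * B) * (\<beta> * Y) \<le> exp (- \<beta> * Y) * (\<beta> * Y)"
      using True Y_bound \<beta>_pos by (intro mult_right_mono) auto
    ultimately have "\<eta> * (exp (- \<beta> * Y) - 1) \<le> \<eta> * (- (\<beta> * exp (- \<beta> * B) * Y))"
      using \<eta>_nonneg by (intro mult_left_mono) (auto simp: algebra_simps)
    then show ?thesis using True by (simp add: algebra_simps)
  next
    case False
    \<comment> \<open>\<open>exp t - 1 \<le> t exp t \<le> t exp (\<beta> B)\<close> for \<open>t = - \<beta> Y > 0\<close>, and the step size is small\<close>
    define t where "t = - \<beta> * Y"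
    have t_pos: "t > 0" using False \<beta>_pos by (simp add: t_def mult_pos_neg)
    have "1 - t \<le> exp (- t)" using exp_ge_add_one_self[of "- t"] by linarith
    then have "exp t * (1 - t) \<le> exp t * exp (- t)" by (rule mult_left_mono) simp
    then have "exp t - 1 \<le> t * exp t" by (simp add: algebra_simps flip: exp_add)
    also have "\<dots> \<le> t * exp (\<beta> * B)"
    proof -
      have "t \<le> \<beta> * B" using Y_bound \<beta>_pos mult_left_mono[of "- Y" B \<beta>] by (simp add: t_def)
      then show ?thesis using t_pos by (intro mult_left_mono) auto
    qed
    finally have "\<eta> * (exp t - 1) \<le> (\<eta> * \<beta> * exp (\<beta> * B)) * (- Y)"
      using \<eta>_nonneg mult_left_mono by (fastforce simp: t_def algebra_simps)
    also have "\<dots> \<le> - Y" using \<eta>_small False mult_right_mono[of _ 1 "- Y"] by simp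
    finally show ?thesis using False by (simp add: t_def)
  qed
  finally show ?thesis .
qed

section \<open>Transient MDPs and the soft Bellman operator\<close>

lemma transient_mdp_nonneg: "transient_mdp p r e \<Longrightarrow> 0 \<le> p s a s'"
  by (simp add: transient_mdp_def)

lemma transient_mdp_sum_one: "transient_mdp p r e \<Longrightarrow> (\<Sum>s'\<in>UNIV. p s a s') = 1"
  by (simp add: transient_mdp_def)

lemma transient_mdp_sink: "transient_mdp p r e \<Longrightarrow> p e a e = 1 \<and> r e a e = 0"
  by (simp add: transient_mdp_def)

lemma transient_mdp_le_one:
  assumes "transient_mdp p r e"
  shows "p s a s' \<le> 1"
  using member_le_sum[of s' UNIV "p s a"] transient_mdp_sum_one[OF assms]
    transient_mdp_nonneg[OF assms] by auto

lemma transient_mdp_sink_absorbing: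
  assumes mdp: "transient_mdp p r e" and "s' \<noteq> e"
  shows "p e a s' = 0"
proof -
  have "(\<Sum>t\<in>UNIV - {e}. p e a t) = (\<Sum>t\<in>UNIV. p e a t) - p e a e"
    by (simp add: sum_diff1)
  then have "(\<Sum>t\<in>UNIV - {e}. p e a t) = 0"
    using transient_mdp_sum_one[OF mdp] transient_mdp_sink[OF mdp] by simp
  then show ?thesis
    using assms(2) transient_mdp_nonneg[OF mdp] by (subst (asm) sum_nonneg_eq_0_iff) auto
qed

lemma transient_mdp_no_trap:
  assumes mdp: "transient_mdp p r e" and "s0 \<in> G" and "e \<notin> G"
    and closed: "\<And>s t. s \<in> G \<Longrightarrow> 0 < p s (\<pi> s) t \<Longrightarrow> t \<in> G"
  shows False
proof -
  have stays: "nstep p \<pi> n s0 t = 0" if "t \<notin> G" for n t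
    using that
  proof (induction n arbitrary: t)
    case 0
    then show ?case using \<open>s0 \<in> G\<close> by auto
  next
    case (Suc n)
    have "nstep p \<pi> n s0 u * p u (\<pi> u) t = 0" for u
    proof (cases "u \<in> G")
      case True
      then have "p u (\<pi> u) t = 0"
        using closed Suc.prems transient_mdp_nonneg[OF mdp, of u "\<pi> u" t] by force
      then show ?thesis by simp
    qed (simp add: Suc.IH)
    then show ?case unfolding nstep.simps by (intro sum.neutral) blast
  qed
  have "(\<lambda>n. nstep p \<pi> n s0 e) \<longlonglongrightarrow> 1"
    using mdp by (simp add: transient_mdp_def)
  then show False using stays[OF \<open>e \<notin> G\<close>] LIMSEQ_unique[OF tendsto_const] by fastforce
qed

lemma ex_Max_range_eq: "\<exists>a. Max (range f) = f a" for f :: "'a::finite \<Rightarrow> 'b::linorder"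
proof -
  have "Max (range f) \<in> range f" by (rule Max_in) auto
  then show ?thesis by (metis rangeE)
qed

lemma Max_range_ge: "f a \<le> Max (range f)" for f :: "'a::finite \<Rightarrow> 'b::linorder"
  by (rule Max_ge) auto

lemma Max_range_le_shift:
  fixes f g :: "'a::finite \<Rightarrow> real"
  assumes "\<And>a. f a \<le> g a + c"
  shows "Max (range f) \<le> Max (range g) + c"
  using ex_Max_range_eq[of f] assms Max_range_ge[of g] by (metis add_le_cancel_right order_trans)

definition return_mgf ::
  "real \<Rightarrow> ('s::finite \<Rightarrow> 'a::finite \<Rightarrow> 's \<Rightarrow> real) \<Rightarrow> ('s \<Rightarrow> 'a \<Rightarrow> 's \<Rightarrow> real)
    \<Rightarrow> ('s \<Rightarrow> 'a \<Rightarrow> real) \<Rightarrow> 's \<Rightarrow> 'a \<Rightarrow> real" where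
  "return_mgf \<beta> p r q s a = (\<Sum>s'\<in>UNIV. p s a s' * exp (- \<beta> * (r s a s' + Max (range (q s')))))"

definition soft_bellman ::
  "real \<Rightarrow> ('s::finite \<Rightarrow> 'a::finite \<Rightarrow> 's \<Rightarrow> real) \<Rightarrow> ('s \<Rightarrow> 'a \<Rightarrow> 's \<Rightarrow> real)
    \<Rightarrow> ('s \<Rightarrow> 'a \<Rightarrow> real) \<Rightarrow> 's \<Rightarrow> 'a \<Rightarrow> real" where
  "soft_bellman \<beta> p r q s a = - ln (return_mgf \<beta> p r q s a) / \<beta>"

lemma return_mgf_pos:
  assumes "transient_mdp p r e"
  shows "0 < return_mgf \<beta> p r q s a"
proof -
  obtain s' where "p s a s' \<noteq> 0"
    using transient_mdp_sum_one[OF assms, of s a] by (metis sum.neutral zero_neq_one)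
  then have "0 < p s a s' * exp (- \<beta> * (r s a s' + Max (range (q s'))))"
    using transient_mdp_nonneg[OF assms] by (simp add: order_less_le)
  also have "\<dots> \<le> return_mgf \<beta> p r q s a" unfolding return_mgf_def
    by (rule member_le_sum) (auto intro!: mult_nonneg_nonneg transient_mdp_nonneg[OF assms])
  finally show ?thesis .
qed

lemma exp_soft_bellman:
  assumes "transient_mdp p r e" and "\<beta> > 0"
  shows "exp (- \<beta> * soft_bellman \<beta> p r q s a) = return_mgf \<beta> p r q s a"
  using return_mgf_pos[OF assms(1)] assms(2) by (simp add: soft_bellman_def)

lemma le_soft_bellman_iff:
  assumes "transient_mdp p r e" and "\<beta> > 0"
  shows "x \<le> soft_bellman \<beta> p r q s a \<longleftrightarrow> return_mgf \<beta> p r q s a \<le> exp (- \<beta> * x)"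
  using assms by (simp flip: exp_soft_bellman)

lemma soft_bellman_le_iff:
  assumes "transient_mdp p r e" and "\<beta> > 0"
  shows "soft_bellman \<beta> p r q s a \<le> x \<longleftrightarrow> exp (- \<beta> * x) \<le> return_mgf \<beta> p r q s a"
  using assms by (simp flip: exp_soft_bellman)

lemma exp_loss_eq:
  assumes mdp: "transient_mdp p r e" and \<beta>_pos: "\<beta> > 0"
  shows "exp_loss \<beta> p r q s a y = (exp (\<beta> * y) * return_mgf \<beta> p r q s a - 1) / \<beta>
      + (\<Sum>s'\<in>UNIV. p s a s' * (r s a s' + Max (range (q s')))) - y"
proof -
  have summand: "p s a s' * ell \<beta> (X - y) = exp (\<beta> * y) / \<beta> * (p s a s' * exp (- \<beta> * X))
      + p s a s' * X - (1 / \<beta> + y) * p s a s'" for s' X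
    using \<beta>_pos by (simp add: ell_def field_simps flip: exp_add)
  show ?thesis
    unfolding exp_loss_def summand
    using transient_mdp_sum_one[OF mdp] \<beta>_pos
    by (simp add: sum.distrib sum_subtractf return_mgf_def field_simps
        flip: sum_distrib_left sum_distrib_right sum_divide_distrib)
qed

lemma Bhat_eq_soft_bellman:
  assumes mdp: "transient_mdp p r e" and \<beta>_pos: "\<beta> > 0"
  shows "Bhat \<beta> p r q s a = soft_bellman \<beta> p r q s a"
proof -
  define y0 where "y0 = soft_bellman \<beta> p r q s a"
  have "return_mgf \<beta> p r q s a = exp (- \<beta> * y0)"
    using exp_soft_bellman[OF mdp \<beta>_pos] by (simp add: y0_def)
  then have mgf_eq: "exp (\<beta> * y) * return_mgf \<beta> p r q s a = exp (\<beta> * (y - y0))" for y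
    by (simp add: algebra_simps flip: exp_add)
  \<comment> \<open>the expected loss is \<open>\<phi> (\<beta> (y - y0)) / \<beta>\<close> up to a constant, with \<open>\<phi> t = exp t - 1 - t\<close>\<close>
  have loss_diff: "exp_loss \<beta> p r q s a y - exp_loss \<beta> p r q s a y0
      = (exp (\<beta> * (y - y0)) - 1 - \<beta> * (y - y0)) / \<beta>" for y
    unfolding exp_loss_eq[OF mdp \<beta>_pos] mgf_eq using \<beta>_pos by (simp add: field_simps)
  have "exp_loss \<beta> p r q s a y0 \<le> exp_loss \<beta> p r q s a y" for y
  proof -
    have "0 \<le> exp (\<beta> * (y - y0)) - 1 - \<beta> * (y - y0)"
      using exp_ge_add_one_self[of "\<beta> * (y - y0)"] by linarith
    then have "0 \<le> (exp (\<beta> * (y - y0)) - 1 - \<beta> * (y - y0)) / \<beta>" using \<beta>_pos by simp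
    then show ?thesis using loss_diff[of y] by linarith
  qed
  moreover have "y = y0" if "\<forall>y'. exp_loss \<beta> p r q s a y \<le> exp_loss \<beta> p r q s a y'" for y
  proof (rule ccontr)
    assume "y \<noteq> y0"
    then have "0 < exp (\<beta> * (y - y0)) - 1 - \<beta> * (y - y0)"
      using exp_minus_greater[of "- \<beta> * (y - y0)"] \<beta>_pos by simp
    then have "0 < (exp (\<beta> * (y - y0)) - 1 - \<beta> * (y - y0)) / \<beta>" using \<beta>_pos by simp
    then have "exp_loss \<beta> p r q s a y0 < exp_loss \<beta> p r q s a y" using loss_diff[of y] by linarith
    with that show False by (meson not_le)
  qed
  ultimately show ?thesis
    unfolding Bhat_def y0_def[symmetric] by (intro the_equality) auto
qed

lemma return_mgf_ge_shift:
  fixes q U :: "'s::finite \<Rightarrow> 'a::finite \<Rightarrow> real"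
  assumes mdp: "transient_mdp p r e" and \<beta>_pos: "\<beta> > 0" and le: "\<And>s a. q s a \<le> U s a + c"
  shows "exp (- \<beta> * c) * return_mgf \<beta> p r U s a \<le> return_mgf \<beta> p r q s a"
  unfolding return_mgf_def sum_distrib_left
proof (intro sum_mono)
  fix s'
  have "Max (range (q s')) \<le> Max (range (U s')) + c" by (rule Max_range_le_shift) (rule le)
  then have "\<beta> * Max (range (q s')) \<le> \<beta> * (Max (range (U s')) + c)"
    using \<beta>_pos by (intro mult_left_mono) auto
  then have "exp (- \<beta> * c) * exp (- \<beta> * (r s a s' + Max (range (U s'))))
      \<le> exp (- \<beta> * (r s a s' + Max (range (q s'))))"
    using \<beta>_pos by (simp add: algebra_simps flip: exp_add)
  then show "exp (- \<beta> * c) * (p s a s' * exp (- \<beta> * (r s a s' + Max (range (U s')))))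
      \<le> p s a s' * exp (- \<beta> * (r s a s' + Max (range (q s'))))"
    using transient_mdp_nonneg[OF mdp, of s a s'] by (simp add: mult.left_commute mult_left_mono)
qed

lemma return_mgf_le_shift:
  fixes q U :: "'s::finite \<Rightarrow> 'a::finite \<Rightarrow> real"
  assumes mdp: "transient_mdp p r e" and \<beta>_pos: "\<beta> > 0" and le: "\<And>s a. U s a - c \<le> q s a"
  shows "return_mgf \<beta> p r q s a \<le> exp (\<beta> * c) * return_mgf \<beta> p r U s a"
proof -
  have "exp (- \<beta> * c) * return_mgf \<beta> p r q s a \<le> return_mgf \<beta> p r U s a"
    using le by (intro return_mgf_ge_shift[OF mdp \<beta>_pos]) (simp add: algebra_simps)
  then have "exp (\<beta> * c) * (exp (- \<beta> * c) * return_mgf \<beta> p r q s a)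
      \<le> exp (\<beta> * c) * return_mgf \<beta> p r U s a"
    by (simp add: mult_left_mono)
  then show ?thesis by (simp flip: mult.assoc exp_add)
qed

text \<open>Both Bellman inequalities at \<open>(s, a)\<close> must be equalities, hence so is
  \<open>Max (range (x s')) \<le> Max (range (y s')) + d\<close> at every possible successor \<open>s'\<close>.\<close>
lemma max_gap_propagates:
  fixes x y :: "'s::finite \<Rightarrow> 'a::finite \<Rightarrow> real"
  assumes mdp: "transient_mdp p r e" and \<beta>_pos: "\<beta> > 0"
    and sub: "x s a \<le> soft_bellman \<beta> p r x s a" and super: "soft_bellman \<beta> p r y s a \<le> y s a"
    and gap_le: "\<And>s a. x s a - y s a \<le> d" and gap: "x s a - y s a = d"
    and succ: "0 < p s a s'"
  shows "\<exists>a'. x s' a' - y s' a' = d"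
proof -
  define tx where "tx t = p s a t * exp (- \<beta> * (r s a t + Max (range (x t))))" for t
  define ty where "ty t = exp (- \<beta> * d) * (p s a t * exp (- \<beta> * (r s a t + Max (range (y t)))))" for t
  have Max_le: "Max (range (x t)) \<le> Max (range (y t)) + d" for t
    using gap_le by (intro Max_range_le_shift) (simp add: algebra_simps)
  have ty_le: "ty t \<le> tx t" for t
  proof -
    have "\<beta> * Max (range (x t)) \<le> \<beta> * (Max (range (y t)) + d)"
      using Max_le[of t] \<beta>_pos by (intro mult_left_mono) auto
    then have "exp (- \<beta> * d) * exp (- \<beta> * (r s a t + Max (range (y t))))
        \<le> exp (- \<beta> * (r s a t + Max (range (x t))))"
      by (simp add: algebra_simps flip: exp_add)
    then show ?thesis unfolding tx_def ty_def
      using transient_mdp_nonneg[OF mdp, of s a t] by (simp add: mult.left_commute mult_left_mono)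
  qed
  have "sum tx UNIV \<le> exp (- \<beta> * x s a)"
    using sub le_soft_bellman_iff[OF mdp \<beta>_pos] by (simp add: tx_def return_mgf_def)
  also have "\<dots> = exp (- \<beta> * d) * exp (- \<beta> * y s a)"
    using gap by (simp add: algebra_simps flip: exp_add)
  also have "\<dots> \<le> exp (- \<beta> * d) * return_mgf \<beta> p r y s a"
    using super soft_bellman_le_iff[OF mdp \<beta>_pos] by (intro mult_left_mono) auto
  also have "\<dots> = sum ty UNIV" by (simp add: ty_def return_mgf_def sum_distrib_left)
  finally have "(\<Sum>t\<in>UNIV. tx t - ty t) = 0"
    using ty_le by (simp add: sum_subtractf) (meson antisym sum_mono)
  then have "tx s' = ty s'"
    using ty_le by (subst (asm) sum_nonneg_eq_0_iff) auto
  then have "\<beta> * Max (range (x s')) = \<beta> * (Max (range (y s')) + d)"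
    using succ by (simp add: tx_def ty_def algebra_simps flip: exp_add)
  then have "Max (range (x s')) = Max (range (y s')) + d" using \<beta>_pos by simp
  moreover obtain a' where "Max (range (x s')) = x s' a'" using ex_Max_range_eq[of "x s'"] by blast
  ultimately have "d \<le> x s' a' - y s' a'" using Max_range_ge[of "y s'" a'] by linarith
  then show ?thesis using gap_le[of s' a'] by (intro exI[of _ a']) simp
qed

text \<open>Comparison principle: transience rules out a closed set of states on which the
  maximal positive gap between a sub- and a super-solution could persist.\<close>
lemma soft_bellman_comparison:
  fixes x y :: "'s::finite \<Rightarrow> 'a::finite \<Rightarrow> real"
  assumes mdp: "transient_mdp p r e" and \<beta>_pos: "\<beta> > 0"
    and sub: "\<And>s a. x s a \<le> soft_bellman \<beta> p r x s a"
    and super: "\<And>s a. soft_bellman \<beta> p r y s a \<le> y s a"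
    and x_sink: "\<And>a. x e a = 0" and y_sink: "\<And>a. y e a = 0"
  shows "x s a \<le> y s a"
proof (rule ccontr)
  assume "\<not> x s a \<le> y s a"
  define d where "d = Max (range (\<lambda>(s, a). x s a - y s a))"
  have gap_le: "x s a - y s a \<le> d" for s a
    unfolding d_def by (rule Max_ge) (auto intro!: image_eqI[where x = "(s, a)"])
  have d_pos: "d > 0" using gap_le[of s a] \<open>\<not> x s a \<le> y s a\<close> by simp
  have "d \<in> range (\<lambda>(s, a). x s a - y s a)" unfolding d_def by (rule Max_in) auto
  then obtain s0 a0 where gap0: "x s0 a0 - y s0 a0 = d" by auto
  define G where "G = {s. \<exists>a. x s a - y s a = d}"
  define \<pi> where "\<pi> s = (SOME a. x s a - y s a = d)" for s
  have \<pi>_gap: "x s (\<pi> s) - y s (\<pi> s) = d" if "s \<in> G" for s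
    using that unfolding G_def \<pi>_def by (auto intro: someI)
  show False
  proof (rule transient_mdp_no_trap[OF mdp])
    show "s0 \<in> G" using gap0 by (auto simp: G_def)
    show "e \<notin> G" using x_sink y_sink d_pos by (auto simp: G_def)
    show "t \<in> G" if "s \<in> G" and "0 < p s (\<pi> s) t" for s t
      using max_gap_propagates[OF mdp \<beta>_pos sub super gap_le \<pi>_gap[OF \<open>s \<in> G\<close>] that(2)]
      by (simp add: G_def)
  qed
qed

lemma soft_bellman_fixed_point_unique:
  assumes mdp: "transient_mdp p r e" and \<beta>_pos: "\<beta> > 0"
    and "\<And>s a. x s a = soft_bellman \<beta> p r x s a" and "\<And>a. x e a = 0"
    and "\<And>s a. y s a = soft_bellman \<beta> p r y s a" and "\<And>a. y e a = 0"
  shows "x = y"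
proof (intro ext antisym)
  fix s a
  show "x s a \<le> y s a" "y s a \<le> x s a"
    using soft_bellman_comparison[OF mdp \<beta>_pos] assms(3-6) by (metis order_refl)+
qed

section \<open>Convergence along a single path\<close>

lemma finite_ex_uniform_bound:
  fixes f :: "'x::finite \<Rightarrow> 'i \<Rightarrow> real"
  assumes "\<And>x. \<exists>B. \<forall>i. f x i \<le> B"
  shows "\<exists>B. \<forall>x i. f x i \<le> B"
proof -
  obtain B where "\<And>x i. f x i \<le> B x" using assms by metis
  moreover have "B x \<le> Max (range B)" for x by (rule Max_ge) auto
  ultimately show ?thesis by (meson order_trans)
qed

primrec attractor :: "('s::finite \<Rightarrow> 'a::finite \<Rightarrow> 's \<Rightarrow> real) \<Rightarrow> 's \<Rightarrow> nat \<Rightarrow> 's set" where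
  "attractor p e 0 = {e}"
| "attractor p e (Suc k) = attractor p e k \<union> {s. \<forall>a. \<exists>s'\<in>attractor p e k. 0 < p s a s'}"

lemma sink_in_attractor: "e \<in> attractor p e k"
  by (induction k) auto

lemma attractor_grows:
  assumes mdp: "transient_mdp p r e" and "attractor p e k \<noteq> UNIV"
  shows "attractor p e k \<subset> attractor p e (Suc k)"
proof (rule ccontr)
  assume "\<not> attractor p e k \<subset> attractor p e (Suc k)"
  then have same: "attractor p e (Suc k) = attractor p e k" by auto
  define G where "G = - attractor p e k"
  \<comment> \<open>outside the attractor some action avoids it surely, so the complement is a trap\<close>
  have "\<exists>a. \<forall>s'\<in>attractor p e k. \<not> 0 < p s a s'" if "s \<in> G" for s
    using that same by (auto simp: G_def)
  then obtain \<pi> where \<pi>: "\<And>s s'. s \<in> G \<Longrightarrow> s' \<in> attractor p e k \<Longrightarrow> \<not> 0 < p s (\<pi> s) s'"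
    by metis
  obtain s0 where "s0 \<in> G" using assms(2) by (auto simp: G_def)
  then show False
    by (rule transient_mdp_no_trap[OF mdp]) (use \<pi> sink_in_attractor in \<open>auto simp: G_def\<close>)
qed

lemma attractor_eventually_UNIV:
  fixes p :: "'s::finite \<Rightarrow> 'a::finite \<Rightarrow> 's \<Rightarrow> real"
  assumes mdp: "transient_mdp p r e"
  shows "\<exists>k. attractor p e k = UNIV"
proof (rule ccontr)
  assume never: "\<nexists>k. attractor p e k = UNIV"
  have "k + 1 \<le> card (attractor p e k)" for k
  proof (induction k)
    case (Suc k)
    have "card (attractor p e k) < card (attractor p e (Suc k))"
      using attractor_grows[OF mdp] never by (intro psubset_card_mono) auto
    with Suc.IH show ?case by simp
  qed simp
  moreover have "card (attractor p e k) \<le> card (UNIV :: 's set)" for k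
    by (rule card_mono) auto
  ultimately show False by (metis add_le_same_cancel1 le_trans not_one_le_zero)
qed

text \<open>A single sample path of the iteration.  The hypotheses are those that hold almost
  surely in the stochastic setting; \<open>noise_summable\<close> is the one supplied by the martingale
  argument.\<close>
locale q_learning_path =
  fixes p :: "'s::finite \<Rightarrow> 'a::finite \<Rightarrow> 's \<Rightarrow> real" and r :: "'s \<Rightarrow> 'a \<Rightarrow> 's \<Rightarrow> real"
    and e :: 's and \<beta> zmin zmax :: real
    and q :: "nat \<Rightarrow> 's \<Rightarrow> 'a \<Rightarrow> real" and \<eta> :: "nat \<Rightarrow> real"
    and S :: "nat \<Rightarrow> 's" and A :: "nat \<Rightarrow> 'a" and S' :: "nat \<Rightarrow> 's" and z :: "nat \<Rightarrow> real"
  assumes mdp: "transient_mdp p r e" and \<beta>_pos: "\<beta> > 0"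
    and q_0: "\<And>s a. q 0 s a = 0"
    and z_eq: "\<And>i. z i = r (S i) (A i) (S' i) + Max (range (q i (S' i))) - q i (S i) (A i)"
    and q_Suc: "\<And>i s a. q (Suc i) s a =
      (if (s, a) = (S i, A i) then q i s a - \<eta> i * (exp (- \<beta> * z i) - 1) else q i s a)"
    and \<eta>_nonneg: "\<And>i. 0 \<le> \<eta> i"
    and td_bounded: "\<And>i s'. 0 < p (S i) (A i) s' \<Longrightarrow>
      r (S i) (A i) s' + Max (range (q i s')) - q i (S i) (A i) \<in> {zmin..zmax}"
    and next_state_possible: "\<And>i. 0 < p (S i) (A i) (S' i)"
    and steps_not_summable: "\<And>s a. \<not> summable (\<lambda>i. if (S i, A i) = (s, a) then \<eta> i else 0)"
    and steps_tendsto_zero: "\<And>s a. (\<lambda>i. if (S i, A i) = (s, a) then \<eta> i else 0) \<longlonglongrightarrow> 0"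
    and noise_summable: "\<And>s a. summable (\<lambda>i. if (S i, A i) = (s, a)
      then \<eta> i * (exp (\<beta> * q i (S i) (A i)) * return_mgf \<beta> p r (q i) (S i) (A i) - exp (- \<beta> * z i))
      else 0)"
begin

definition step :: "'s \<Rightarrow> 'a \<Rightarrow> nat \<Rightarrow> real" where
  "step s a i = (if (S i, A i) = (s, a) then \<eta> i else 0)"

text \<open>The conditional mean of \<open>exp (- \<beta> * z i)\<close> given the past, since
  \<open>z i\<close> is \<open>r + Max (range (q i s')) - q i (S i) (A i)\<close> with \<open>s'\<close> drawn from \<open>p (S i) (A i)\<close>.\<close>
definition mean_exp_td :: "nat \<Rightarrow> real" where
  "mean_exp_td i = exp (\<beta> * q i (S i) (A i)) * return_mgf \<beta> p r (q i) (S i) (A i)"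

definition noise :: "nat \<Rightarrow> real" where
  "noise i = mean_exp_td i - exp (- \<beta> * z i)"

lemma step_nonneg: "0 \<le> step s a i"
  by (simp add: step_def \<eta>_nonneg)

lemma step_noise_summable: "summable (\<lambda>i. step s a i * noise i)"
proof -
  have "(\<lambda>i. step s a i * noise i) = (\<lambda>i. if (S i, A i) = (s, a)
      then \<eta> i * (exp (\<beta> * q i (S i) (A i)) * return_mgf \<beta> p r (q i) (S i) (A i) - exp (- \<beta> * z i))
      else 0)"
    by (auto simp: fun_eq_iff step_def noise_def mean_exp_td_def)
  then show ?thesis using noise_summable[of s a] by simp
qed

lemma scaled_steps_not_summable: "k \<noteq> 0 \<Longrightarrow> \<not> summable (\<lambda>i. k * step s a i)"
  using steps_not_summable[of s a] by (simp add: step_def[abs_def] summable_cmult_iff)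

lemma eventually_scaled_step_le_one: "eventually (\<lambda>i. k * step s a i \<le> 1) sequentially"
proof -
  have "(\<lambda>i. k * step s a i) \<longlonglongrightarrow> 0"
    using tendsto_mult_right_zero[OF steps_tendsto_zero[of s a], of k] by (simp add: step_def[abs_def])
  then have "eventually (\<lambda>i. k * step s a i < 1) sequentially" by (rule order_tendstoD(2)) simp
  then show ?thesis by eventually_elim simp
qed

lemma q_Suc_eq: "q (Suc i) s a = q i s a + step s a i * (1 - mean_exp_td i) + step s a i * noise i"
  by (simp add: q_Suc step_def noise_def algebra_simps)

lemma q_Suc_unvisited: "(S i, A i) \<noteq> (s, a) \<Longrightarrow> q (Suc i) s a = q i s a"
  by (auto simp: q_Suc)

lemma td_range: "z i \<in> {zmin..zmax}"
  using td_bounded[OF next_state_possible[of i]] z_eq[of i] by simp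

lemma q_sink: "q i e a = 0"
proof (induction i arbitrary: a)
  case (Suc i)
  show ?case
  proof (cases "(S i, A i) = (e, a)")
    case True
    then have "S' i = e"
      using next_state_possible[of i] transient_mdp_sink_absorbing[OF mdp] by force
    moreover have "Max (range (q i e)) = 0" using ex_Max_range_eq[of "q i e"] Suc.IH by force
    ultimately have "z i = 0" using z_eq[of i] True Suc.IH transient_mdp_sink[OF mdp] by simp
    then show ?thesis using True Suc.IH by (simp add: q_Suc)
  qed (simp add: q_Suc_unvisited Suc.IH)
qed (simp add: q_0)

lemma eventually_q_le_soft_bellman:
  assumes le: "eventually (\<lambda>i. \<forall>s a. q i s a \<le> U s a + c) sequentially" and "\<delta> > 0"
  shows "eventually (\<lambda>i. q i s a \<le> soft_bellman \<beta> p r U s a + c + \<delta>) sequentially"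
proof -
  define D where "D i = q i s a - (soft_bellman \<beta> p r U s a + c)" for i
  have "eventually (\<lambda>i. D i \<le> \<delta>) sequentially"
  proof (rule eventually_le_of_perturbed_contraction[OF _ eventually_scaled_step_le_one
        scaled_steps_not_summable step_noise_summable _ \<open>\<delta> > 0\<close>])
    show "0 \<le> \<beta> * step s a i" for i using \<beta>_pos step_nonneg by simp
    show "\<beta> \<noteq> 0" using \<beta>_pos by simp
    show "eventually (\<lambda>i. D (Suc i) \<le> (1 - \<beta> * step s a i) * max (D i) 0 + step s a i * noise i)
        sequentially"
      using le eventually_scaled_step_le_one[of \<beta> s a]
    proof eventually_elim
      case (elim i)
      show ?case
      proof (cases "(S i, A i) = (s, a)")
        case True
        have "exp (- \<beta> * c) * return_mgf \<beta> p r U s a \<le> return_mgf \<beta> p r (q i) s a"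
          using elim by (intro return_mgf_ge_shift[OF mdp \<beta>_pos]) auto
        then have "exp (\<beta> * D i) \<le> mean_exp_td i"
          using True
          by (simp add: mean_exp_td_def D_def algebra_simps mult_left_mono
              flip: exp_soft_bellman[OF mdp \<beta>_pos] exp_add)
        have "D (Suc i) = D i + step s a i * (1 - mean_exp_td i) + step s a i * noise i"
          by (simp add: D_def q_Suc_eq)
        also have "\<dots> \<le> (1 - \<beta> * step s a i) * max (D i) 0 + step s a i * noise i"
          using upper_update_contracts[OF \<open>exp (\<beta> * D i) \<le> mean_exp_td i\<close> step_nonneg elim(2)]
          by simp
        finally show ?thesis .
      next
        case False
        then have "step s a i = 0" "q (Suc i) s a = q i s a" by (auto simp: step_def q_Suc_unvisited)
        then show ?thesis by (simp add: D_def)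
      qed
    qed
  qed
  then show ?thesis by eventually_elim (simp add: D_def)
qed

lemma eventually_soft_bellman_le_q:
  assumes le: "eventually (\<lambda>i. \<forall>s a. U s a - c \<le> q i s a) sequentially" and "\<delta> > 0"
    and q_bound: "\<And>i. \<bar>q i s a\<bar> \<le> B"
  shows "eventually (\<lambda>i. soft_bellman \<beta> p r U s a - c - \<delta> \<le> q i s a) sequentially"
proof -
  define Y where "Y i = soft_bellman \<beta> p r U s a - c - q i s a" for i
  define B' where "B' = \<bar>soft_bellman \<beta> p r U s a - c\<bar> + B"
  have Y_bound: "\<bar>Y i\<bar> \<le> B'" for i using q_bound[of i] by (simp add: Y_def B'_def)
  \<comment> \<open>below the fixed point the contraction rate degrades to \<open>\<beta> exp (- \<beta> B')\<close>\<close>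
  define k where "k = \<beta> * exp (- \<beta> * B')"
  have "eventually (\<lambda>i. Y i \<le> \<delta>) sequentially"
  proof (rule eventually_le_of_perturbed_contraction[OF _ eventually_scaled_step_le_one
        scaled_steps_not_summable summable_minus[OF step_noise_summable] _ \<open>\<delta> > 0\<close>])
    show "0 \<le> k * step s a i" for i using \<beta>_pos step_nonneg by (simp add: k_def)
    show "k \<noteq> 0" using \<beta>_pos by (simp add: k_def)
    show "eventually (\<lambda>i. Y (Suc i) \<le> (1 - k * step s a i) * max (Y i) 0 + - (step s a i * noise i))
        sequentially"
      using le eventually_scaled_step_le_one[of "\<beta> * exp (\<beta> * B')" s a]
    proof eventually_elim
      case (elim i)
      show ?case
      proof (cases "(S i, A i) = (s, a)")
        case True
        have "return_mgf \<beta> p r (q i) s a \<le> exp (\<beta> * c) * return_mgf \<beta> p r U s a"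
          using elim by (intro return_mgf_le_shift[OF mdp \<beta>_pos]) auto
        then have h: "mean_exp_td i \<le> exp (- \<beta> * Y i)"
          using True
          by (simp add: mean_exp_td_def Y_def algebra_simps mult_left_mono
              flip: exp_soft_bellman[OF mdp \<beta>_pos] exp_add)
        moreover have "step s a i * \<beta> * exp (\<beta> * B') \<le> 1" using elim(2) by (simp add: mult_ac)
        ultimately have "Y i - step s a i * (1 - mean_exp_td i) \<le> (1 - k * step s a i) * max (Y i) 0"
          using lower_update_contracts[OF h step_nonneg \<beta>_pos Y_bound] by (simp add: k_def mult_ac)
        then show ?thesis by (simp add: Y_def q_Suc_eq)
      next
        case False
        then have "step s a i = 0" "q (Suc i) s a = q i s a" by (auto simp: step_def q_Suc_unvisited)
        then show ?thesis by (simp add: Y_def)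
      qed
    qed
  qed
  then show ?thesis by eventually_elim (simp add: Y_def)
qed

lemma q_bounded_if_bounded_at_visits:
  assumes at_visits: "\<And>i. (S i, A i) = (s, a) \<Longrightarrow> \<bar>q i s a\<bar> \<le> K"
  shows "\<exists>B. \<forall>i. \<bar>q i s a\<bar> \<le> B"
proof -
  have "Bseq (step s a)"
    using steps_tendsto_zero[of s a] by (intro convergent_imp_Bseq convergentI) (simp add: step_def[abs_def])
  then obtain H where H: "\<And>i. step s a i \<le> H" unfolding Bseq_def by (metis abs_le_D1 real_norm_def)
  define C where "C = exp (- \<beta> * zmin) + 1"
  have "\<bar>exp (- \<beta> * z i) - 1\<bar> \<le> C" for i
  proof -
    have "exp (- \<beta> * z i) \<le> exp (- \<beta> * zmin)" using td_range[of i] \<beta>_pos by simp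
    moreover have "0 < exp (- \<beta> * z i)" "0 < exp (- \<beta> * zmin)" by simp_all
    ultimately show ?thesis unfolding C_def abs_le_iff by (intro conjI) linarith+
  qed
  then have jump: "\<bar>\<eta> i * (exp (- \<beta> * z i) - 1)\<bar> \<le> H * C" if "(S i, A i) = (s, a)" for i
    using H[of i] that \<eta>_nonneg[of i] unfolding abs_mult
    by (intro mult_mono) (auto simp: step_def)
  have "\<bar>q i s a\<bar> \<le> \<bar>K\<bar> + H * C" for i
  proof (induction i)
    case 0
    have "0 \<le> H" using H[of 0] step_nonneg[of s a 0] by linarith
    then show ?case by (simp add: q_0 C_def)
  next
    case (Suc i)
    show ?case
    proof (cases "(S i, A i) = (s, a)")
      case True
      then show ?thesis using q_Suc[of i s a] at_visits[OF True] jump[OF True] by auto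
    qed (simp add: q_Suc_unvisited Suc.IH)
  qed
  then show ?thesis by blast
qed

text \<open>A visit to \<open>(s, a)\<close> pins \<open>q i s a\<close> within the bounded TD range of any possible successor.\<close>
lemma q_bounded_if_successor_bounded:
  assumes succ: "0 < p s a s'" and bounded: "\<And>i a'. \<bar>q i s' a'\<bar> \<le> B"
  shows "\<exists>B'. \<forall>i. \<bar>q i s a\<bar> \<le> B'"
proof (rule q_bounded_if_bounded_at_visits)
  fix i assume visit: "(S i, A i) = (s, a)"
  then have "r s a s' + Max (range (q i s')) - q i s a \<in> {zmin..zmax}"
    using td_bounded[of i s'] succ by auto
  moreover have "\<bar>Max (range (q i s'))\<bar> \<le> B"
    using ex_Max_range_eq[of "q i s'"] bounded by metis
  ultimately show "\<bar>q i s a\<bar> \<le> \<bar>r s a s'\<bar> + B + \<bar>zmin\<bar> + \<bar>zmax\<bar>" by auto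
qed

lemma q_bounded_on_attractor: "s \<in> attractor p e k \<Longrightarrow> \<exists>B. \<forall>i. \<bar>q i s a\<bar> \<le> B"
proof (induction k arbitrary: s a)
  case 0
  then show ?case using q_sink by auto
next
  case (Suc k)
  show ?case
  proof (cases "s \<in> attractor p e k")
    case False
    then obtain s' where s': "s' \<in> attractor p e k" "0 < p s a s'" using Suc.prems by auto
    obtain B where "\<And>a' i. \<bar>q i s' a'\<bar> \<le> B"
      using finite_ex_uniform_bound[of "\<lambda>a' i. \<bar>q i s' a'\<bar>"] Suc.IH[OF s'(1)] by blast
    then show ?thesis by (rule q_bounded_if_successor_bounded[OF s'(2)])
  qed (rule Suc.IH)
qed

lemma q_bounded: "\<exists>B. \<forall>i. \<bar>q i s a\<bar> \<le> B"
  using attractor_eventually_UNIV[OF mdp] q_bounded_on_attractor by blast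

definition q_sup :: "'s \<Rightarrow> 'a \<Rightarrow> real" where
  "q_sup s a = real_of_ereal (limsup (\<lambda>i. ereal (q i s a)))"

definition q_inf :: "'s \<Rightarrow> 'a \<Rightarrow> real" where
  "q_inf s a = real_of_ereal (liminf (\<lambda>i. ereal (q i s a)))"

lemma limsup_liminf_q:
  "limsup (\<lambda>i. ereal (q i s a)) = ereal (q_sup s a)"
  "liminf (\<lambda>i. ereal (q i s a)) = ereal (q_inf s a)"
proof -
  obtain B where B: "\<And>i. \<bar>q i s a\<bar> \<le> B" using q_bounded by blast
  have "limsup (\<lambda>i. ereal (q i s a)) \<le> ereal B"
    using B by (intro Limsup_bounded always_eventually) (simp add: abs_le_D1)
  moreover have "ereal (- B) \<le> liminf (\<lambda>i. ereal (q i s a))"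
    using B by (intro Liminf_bounded always_eventually allI) (metis abs_le_D2 minus_le_iff ereal_less_eq(3))
  moreover have "liminf (\<lambda>i. ereal (q i s a)) \<le> limsup (\<lambda>i. ereal (q i s a))"
    by (rule Liminf_le_Limsup) simp
  ultimately show "limsup (\<lambda>i. ereal (q i s a)) = ereal (q_sup s a)"
    "liminf (\<lambda>i. ereal (q i s a)) = ereal (q_inf s a)"
    unfolding q_sup_def q_inf_def
    by (cases "limsup (\<lambda>i. ereal (q i s a))"; cases "liminf (\<lambda>i. ereal (q i s a))"; simp)+
qed

lemma q_sup_sub_solution: "q_sup s a \<le> soft_bellman \<beta> p r q_sup s a"
proof (rule field_le_epsilon)
  fix \<epsilon> :: real assume "\<epsilon> > 0"
  then have \<delta>: "\<epsilon> / 2 > 0" by simp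
  have "eventually (\<lambda>i. q i s a \<le> q_sup s a + \<epsilon> / 2) sequentially" for s a
    using Limsup_lessD[of sequentially "\<lambda>i. ereal (q i s a)" "ereal (q_sup s a + \<epsilon> / 2)"] \<delta>
    by (auto simp: limsup_liminf_q elim: eventually_mono)
  then have "eventually (\<lambda>i. \<forall>s a. q i s a \<le> q_sup s a + \<epsilon> / 2) sequentially"
    by (intro eventually_all_finite)
  then have "eventually (\<lambda>i. q i s a \<le> soft_bellman \<beta> p r q_sup s a + \<epsilon> / 2 + \<epsilon> / 2) sequentially"
    by (rule eventually_q_le_soft_bellman[OF _ \<delta>])
  then have "eventually (\<lambda>i. ereal (q i s a) \<le> ereal (soft_bellman \<beta> p r q_sup s a + \<epsilon>)) sequentially"
    by eventually_elim simp
  then have "limsup (\<lambda>i. ereal (q i s a)) \<le> ereal (soft_bellman \<beta> p r q_sup s a + \<epsilon>)"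
    by (intro Limsup_bounded) simp
  then show "q_sup s a \<le> soft_bellman \<beta> p r q_sup s a + \<epsilon>" by (simp add: limsup_liminf_q)
qed

lemma q_inf_super_solution: "soft_bellman \<beta> p r q_inf s a \<le> q_inf s a"
proof (rule field_le_epsilon)
  fix \<epsilon> :: real assume "\<epsilon> > 0"
  then have \<delta>: "\<epsilon> / 2 > 0" by simp
  obtain B where B: "\<And>i. \<bar>q i s a\<bar> \<le> B" using q_bounded by blast
  have "eventually (\<lambda>i. q_inf s a - \<epsilon> / 2 \<le> q i s a) sequentially" for s a
    using less_LiminfD[of "ereal (q_inf s a - \<epsilon> / 2)" sequentially "\<lambda>i. ereal (q i s a)"] \<delta>
    by (auto simp: limsup_liminf_q elim: eventually_mono)
  then have "eventually (\<lambda>i. \<forall>s a. q_inf s a - \<epsilon> / 2 \<le> q i s a) sequentially"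
    by (intro eventually_all_finite)
  then have "eventually (\<lambda>i. soft_bellman \<beta> p r q_inf s a - \<epsilon> / 2 - \<epsilon> / 2 \<le> q i s a) sequentially"
    by (rule eventually_soft_bellman_le_q[OF _ \<delta> B])
  then have "eventually (\<lambda>i. ereal (soft_bellman \<beta> p r q_inf s a - \<epsilon>) \<le> ereal (q i s a)) sequentially"
    by eventually_elim simp
  then have "ereal (soft_bellman \<beta> p r q_inf s a - \<epsilon>) \<le> liminf (\<lambda>i. ereal (q i s a))"
    by (intro Liminf_bounded) simp
  then show "soft_bellman \<beta> p r q_inf s a \<le> q_inf s a + \<epsilon>" by (simp add: limsup_liminf_q)
qed

lemma q_sup_sink: "q_sup e a = 0" and q_inf_sink: "q_inf e a = 0"
  by (simp_all add: q_sup_def q_inf_def q_sink zero_ereal_def Limsup_const Liminf_const)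

lemma q_inf_eq_q_sup: "q_inf = q_sup"
proof (intro ext antisym)
  fix s a
  show "q_sup s a \<le> q_inf s a"
    by (rule soft_bellman_comparison[OF mdp \<beta>_pos q_sup_sub_solution q_inf_super_solution
          q_sup_sink q_inf_sink])
  show "q_inf s a \<le> q_sup s a"
    using Liminf_le_Limsup[of sequentially "\<lambda>i. ereal (q i s a)"] by (simp add: limsup_liminf_q)
qed

lemma q_sup_fixed_point: "q_sup s a = soft_bellman \<beta> p r q_sup s a"
  using q_sup_sub_solution q_inf_super_solution q_inf_eq_q_sup by (metis antisym)

lemma q_tendsto_q_sup: "(\<lambda>i. q i s a) \<longlonglongrightarrow> q_sup s a"
  by (rule limsup_le_liminf_real) (simp_all add: limsup_liminf_q q_inf_eq_q_sup)

end

section \<open>Martingale transforms\<close>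

lemma (in finite_measure) measure_abs_ge_le_integral_square:
  fixes X :: "'a \<Rightarrow> real"
  assumes [measurable]: "X \<in> borel_measurable M" and "integrable M (\<lambda>w. (X w)\<^sup>2)" and "c > 0"
  shows "measure M {w\<in>space M. c \<le> \<bar>X w\<bar>} \<le> (\<integral>w. (X w)\<^sup>2 \<partial>M) / c\<^sup>2"
proof -
  have "{w\<in>space M. c \<le> \<bar>X w\<bar>} = {w\<in>space M. c\<^sup>2 \<le> (X w)\<^sup>2}"
    using \<open>c > 0\<close> by (auto simp flip: abs_le_square_iff)
  then show ?thesis
    using integral_Markov_inequality_measure[of M "\<lambda>w. (X w)\<^sup>2" "space M" "c\<^sup>2"] assms by simp
qed

text \<open>The stopping argument behind Kolmogorov's maximal inequality.\<close>
lemma stopped_sum_ge: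
  fixes x :: "nat \<Rightarrow> real"
  defines "D k \<equiv> \<Sum>i<k. x i"
  assumes k: "k \<in> {m..n}" and exceeds: "\<epsilon> \<le> \<bar>D k - D m\<bar>"
  shows "\<epsilon> \<le> \<bar>\<Sum>i<n. if m \<le> i \<and> (\<forall>j\<in>{m..i}. \<bar>D j - D m\<bar> < \<epsilon>) then x i else 0\<bar>"
proof -
  define k0 where "k0 = (LEAST k. k \<in> {m..n} \<and> \<epsilon> \<le> \<bar>D k - D m\<bar>)"
  have k0: "k0 \<in> {m..n}" "\<epsilon> \<le> \<bar>D k0 - D m\<bar>"
    using LeastI[of "\<lambda>k. k \<in> {m..n} \<and> \<epsilon> \<le> \<bar>D k - D m\<bar>"] k exceeds by (auto simp: k0_def)
  have before: "\<bar>D j - D m\<bar> < \<epsilon>" if "j \<in> {m..n}" "j < k0" for j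
    using not_less_Least[of j "\<lambda>k. k \<in> {m..n} \<and> \<epsilon> \<le> \<bar>D k - D m\<bar>"] that by (auto simp: k0_def)
  have alive_iff: "(m \<le> i \<and> (\<forall>j\<in>{m..i}. \<bar>D j - D m\<bar> < \<epsilon>)) \<longleftrightarrow> i \<in> {m..<k0}" if "i < n" for i
    using before k0 that by (auto simp: not_less) (metis atLeastAtMost_iff not_le)
  have "(\<Sum>i<n. if m \<le> i \<and> (\<forall>j\<in>{m..i}. \<bar>D j - D m\<bar> < \<epsilon>) then x i else 0)
      = (\<Sum>i<n. if i \<in> {m..<k0} then x i else 0)"
    using alive_iff by (intro sum.cong) auto
  also have "\<dots> = (\<Sum>i\<in>{..<n} \<inter> {m..<k0}. x i)"
    by (rule sum.inter_restrict[symmetric]) simp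
  also have "\<dots> = (\<Sum>i\<in>{m..<k0}. x i)" using k0 by (intro sum.cong) auto
  also have "\<dots> = D k0 - D m"
    using k0 by (simp add: D_def sum.atLeastLessThan_concat[of 0 m k0, symmetric] lessThan_atLeast0)
  finally show ?thesis using k0 by simp
qed

locale bounded_mart_diff = prob_space M for M :: "'w measure" +
  fixes F :: "nat \<Rightarrow> 'w measure" and \<xi> :: "nat \<Rightarrow> 'w \<Rightarrow> real" and C :: real
  assumes subalgebra: "\<And>i. subalgebra M (F i)"
    and filtration: "\<And>i j. i \<le> j \<Longrightarrow> subalgebra (F j) (F i)"
    and \<xi>_measurable: "\<And>i. \<xi> i \<in> borel_measurable (F (Suc i))"
    and \<xi>_bounded: "\<And>i w. w \<in> space M \<Longrightarrow> \<bar>\<xi> i w\<bar> \<le> C"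
    and orthogonal: "\<And>i g B. g \<in> borel_measurable (F i) \<Longrightarrow> (\<And>w. w \<in> space M \<Longrightarrow> \<bar>g w\<bar> \<le> B)
      \<Longrightarrow> (\<integral>w. g w * \<xi> i w \<partial>M) = 0"
begin

lemma measurable_filtration_mono:
  "f \<in> borel_measurable (F i) \<Longrightarrow> i \<le> j \<Longrightarrow> f \<in> borel_measurable (F j)"
  by (rule measurable_from_subalg[OF filtration])

lemma measurable_filtration_M: "f \<in> borel_measurable (F i) \<Longrightarrow> f \<in> borel_measurable M"
  by (rule measurable_from_subalg[OF subalgebra])

lemma \<xi>_measurable_M [measurable]: "\<xi> i \<in> borel_measurable M"
  by (rule measurable_filtration_M[OF \<xi>_measurable])

lemma integrable_bounded:
  fixes f :: "'w \<Rightarrow> real"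
  shows "f \<in> borel_measurable M \<Longrightarrow> (\<And>w. w \<in> space M \<Longrightarrow> \<bar>f w\<bar> \<le> B) \<Longrightarrow> integrable M f"
  by (rule integrable_const_bound[where B = B]) auto

lemma C_nonneg: "0 \<le> C"
  using \<xi>_bounded not_empty by (meson abs_ge_zero equals0I order_trans)

lemma weighted_\<xi>_bounded:
  assumes "\<And>i w. w \<in> space M \<Longrightarrow> \<bar>u i w\<bar> \<le> U" and "w \<in> space M"
  shows "\<bar>u i w * \<xi> i w\<bar> \<le> U * C"
proof -
  have "0 \<le> U" using assms(1)[OF assms(2), of i] by (meson abs_ge_zero order_trans)
  then show ?thesis
    unfolding abs_mult using assms(1)[OF assms(2), of i] \<xi>_bounded[OF assms(2), of i]
    by (intro mult_mono) auto
qed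

lemma integrable_weighted_\<xi>_square:
  assumes "u i \<in> borel_measurable M" and "\<And>i w. w \<in> space M \<Longrightarrow> \<bar>u i w\<bar> \<le> U"
  shows "integrable M (\<lambda>w. (u i w * \<xi> i w)\<^sup>2)"
proof (rule integrable_bounded[where B = "(U * C)\<^sup>2"])
  fix w assume "w \<in> space M"
  then have "\<bar>u i w * \<xi> i w\<bar> \<le> U * C" using assms(2) by (rule weighted_\<xi>_bounded[rotated])
  then show "\<bar>(u i w * \<xi> i w)\<^sup>2\<bar> \<le> (U * C)\<^sup>2"
    by (simp add: power2_le_iff_abs_le order.trans[OF abs_ge_zero])
qed (use assms(1) in measurable)

definition mart_transform :: "(nat \<Rightarrow> 'w \<Rightarrow> real) \<Rightarrow> nat \<Rightarrow> 'w \<Rightarrow> real" where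
  "mart_transform u n w = (\<Sum>i<n. u i w * \<xi> i w)"

lemma mart_transform_measurable:
  assumes "\<And>i. u i \<in> borel_measurable (F i)"
  shows "mart_transform u n \<in> borel_measurable (F n)"
proof (induction n)
  case (Suc n)
  have "u n \<in> borel_measurable (F (Suc n))"
    by (rule measurable_filtration_mono[OF assms]) simp
  moreover have "mart_transform u n \<in> borel_measurable (F (Suc n))"
    by (rule measurable_filtration_mono[OF Suc.IH]) simp
  moreover have "mart_transform u (Suc n) = (\<lambda>w. mart_transform u n w + u n w * \<xi> n w)"
    by (simp add: mart_transform_def fun_eq_iff)
  ultimately show ?case using \<xi>_measurable[of n] by simp
qed (simp add: mart_transform_def)

lemma mart_transform_bounded:
  assumes "\<And>i w. w \<in> space M \<Longrightarrow> \<bar>u i w\<bar> \<le> U" and "w \<in> space M"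
  shows "\<bar>mart_transform u n w\<bar> \<le> real n * (U * C)"
proof (induction n)
  case (Suc n)
  have "\<bar>u n w * \<xi> n w\<bar> \<le> U * C" by (rule weighted_\<xi>_bounded[where u = u, OF assms])
  with Suc.IH show ?case by (simp add: mart_transform_def algebra_simps)
qed (simp add: mart_transform_def)

lemma integral_mart_transform_square:
  assumes adapted: "\<And>i. u i \<in> borel_measurable (F i)"
    and bounded: "\<And>i w. w \<in> space M \<Longrightarrow> \<bar>u i w\<bar> \<le> U"
  shows "(\<integral>w. (mart_transform u n w)\<^sup>2 \<partial>M) = (\<Sum>i<n. \<integral>w. (u i w * \<xi> i w)\<^sup>2 \<partial>M)"
proof (induction n)
  case (Suc n)
  define T where "T = mart_transform u n"
  have T_F: "T \<in> borel_measurable (F n)"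
    unfolding T_def by (rule mart_transform_measurable[OF adapted])
  note [measurable] = measurable_filtration_M[OF T_F] measurable_filtration_M[OF adapted]
  have T_bounded: "\<bar>T w\<bar> \<le> real n * (U * C)" if "w \<in> space M" for w
    unfolding T_def by (rule mart_transform_bounded[OF bounded that])
  obtain w0 where "w0 \<in> space M" using not_empty by blast
  then have U_nonneg: "0 \<le> U" using bounded[of w0 0] by (meson abs_ge_zero order_trans)
  have ux_bounded: "\<bar>u n w * \<xi> n w\<bar> \<le> U * C" if "w \<in> space M" for w
    using weighted_\<xi>_bounded[OF bounded that] .
  have "(\<integral>w. 2 * (T w * u n w) * \<xi> n w \<partial>M) = 0"
  proof (rule orthogonal)
    show "(\<lambda>w. 2 * (T w * u n w)) \<in> borel_measurable (F n)" using T_F adapted[of n] by simp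
    show "\<bar>2 * (T w * u n w)\<bar> \<le> 2 * (real n * (U * C) * U)" if "w \<in> space M" for w
      unfolding abs_mult using T_bounded[OF that] bounded[OF that] U_nonneg by (simp add: mult_mono)
  qed
  moreover have "integrable M (\<lambda>w. (T w)\<^sup>2)"
    using T_bounded by (intro integrable_bounded[where B = "(real n * (U * C))\<^sup>2"])
      (auto simp flip: abs_le_square_iff intro: order.trans[OF _ abs_ge_self])
  moreover have "integrable M (\<lambda>w. 2 * (T w * u n w) * \<xi> n w)"
  proof (rule integrable_bounded[where B = "2 * (real n * (U * C) * (U * C))"])
    fix w assume "w \<in> space M"
    then have "\<bar>T w\<bar> * \<bar>u n w * \<xi> n w\<bar> \<le> real n * (U * C) * (U * C)"
      using T_bounded ux_bounded U_nonneg C_nonneg by (intro mult_mono) auto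
    then show "\<bar>2 * (T w * u n w) * \<xi> n w\<bar> \<le> 2 * (real n * (U * C) * (U * C))"
      by (simp add: abs_mult mult.assoc)
  qed measurable
  moreover have "integrable M (\<lambda>w. (u n w * \<xi> n w)\<^sup>2)"
    using bounded by (rule integrable_weighted_\<xi>_square[rotated]) measurable
  moreover have "(mart_transform u (Suc n) w)\<^sup>2
      = (T w)\<^sup>2 + 2 * (T w * u n w) * \<xi> n w + (u n w * \<xi> n w)\<^sup>2" for w
    by (simp add: T_def mart_transform_def power2_eq_square algebra_simps)
  ultimately show ?case using Suc.IH by (simp add: T_def)
qed (simp add: mart_transform_def)

lemma measure_mart_transform_ge:
  assumes adapted: "\<And>i. u i \<in> borel_measurable (F i)"
    and bounded: "\<And>i w. w \<in> space M \<Longrightarrow> \<bar>u i w\<bar> \<le> U" and "\<epsilon> > 0"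
  shows "measure M {w\<in>space M. \<epsilon> \<le> \<bar>mart_transform u n w\<bar>}
    \<le> (\<Sum>i<n. \<integral>w. (u i w * \<xi> i w)\<^sup>2 \<partial>M) / \<epsilon>\<^sup>2"
proof -
  note [measurable] = measurable_filtration_M[OF mart_transform_measurable[OF adapted]]
  have "measure M {w\<in>space M. \<epsilon> \<le> \<bar>mart_transform u n w\<bar>} \<le> (\<integral>w. (mart_transform u n w)\<^sup>2 \<partial>M) / \<epsilon>\<^sup>2"
    using mart_transform_bounded[where u = u, OF bounded] \<open>\<epsilon> > 0\<close>
    by (intro measure_abs_ge_le_integral_square integrable_bounded[where B = "(real n * (U * C))\<^sup>2"])
      (auto simp flip: abs_le_square_iff intro: order.trans[OF _ abs_ge_self])
  then show ?thesis by (simp add: integral_mart_transform_square[OF adapted bounded])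
qed

lemma kolmogorov_maximal_inequality:
  assumes adapted: "\<And>i. u i \<in> borel_measurable (F i)"
    and bounded: "\<And>i w. w \<in> space M \<Longrightarrow> \<bar>u i w\<bar> \<le> U" and "\<epsilon> > 0"
  shows "measure M {w\<in>space M. \<exists>k\<in>{m..n}. \<epsilon> \<le> \<bar>mart_transform u k w - mart_transform u m w\<bar>}
    \<le> (\<Sum>i\<in>{m..<n}. \<integral>w. (u i w * \<xi> i w)\<^sup>2 \<partial>M) / \<epsilon>\<^sup>2"
proof -
  define alive where "alive i w \<longleftrightarrow>
    m \<le> i \<and> (\<forall>k\<in>{m..i}. \<bar>mart_transform u k w - mart_transform u m w\<bar> < \<epsilon>)" for i w
  define g where "g i w = (if alive i w then u i w else 0)" for i w
  have g_adapted: "g i \<in> borel_measurable (F i)" for i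
  proof -
    have [measurable]: "mart_transform u k \<in> borel_measurable (F i)" if "k \<le> i" for k
      using that by (intro measurable_filtration_mono[OF mart_transform_measurable[OF adapted]])
    have "Measurable.pred (F i) (alive i)"
      unfolding alive_def by (cases "m \<le> i") (auto intro!: pred_intros_finite(3))
    then show ?thesis unfolding g_def[abs_def] using adapted[of i] by measurable
  qed
  have g_bounded: "\<bar>g i w\<bar> \<le> U" if "w \<in> space M" for i w
    using bounded[OF that, of i] bounded[OF that, of 0] by (auto simp: g_def)
  note [measurable] = measurable_filtration_M[OF mart_transform_measurable[OF adapted]]
    measurable_filtration_M[OF mart_transform_measurable[OF g_adapted]] measurable_filtration_M[OF adapted]
  have "measure M {w\<in>space M. \<exists>k\<in>{m..n}. \<epsilon> \<le> \<bar>mart_transform u k w - mart_transform u m w\<bar>}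
      \<le> measure M {w\<in>space M. \<epsilon> \<le> \<bar>mart_transform g n w\<bar>}"
  proof (intro finite_measure_mono subsetI)
    fix w assume "w \<in> {w\<in>space M. \<exists>k\<in>{m..n}. \<epsilon> \<le> \<bar>mart_transform u k w - mart_transform u m w\<bar>}"
    then obtain k where w: "w \<in> space M" and "k \<in> {m..n}"
      and "\<epsilon> \<le> \<bar>mart_transform u k w - mart_transform u m w\<bar>" by blast
    then have "\<epsilon> \<le> \<bar>\<Sum>i<n. if alive i w then u i w * \<xi> i w else 0\<bar>"
      using stopped_sum_ge[of k m n \<epsilon> "\<lambda>i. u i w * \<xi> i w"] by (simp add: alive_def mart_transform_def)
    moreover have "mart_transform g n w = (\<Sum>i<n. if alive i w then u i w * \<xi> i w else 0)"
      by (auto simp: mart_transform_def g_def intro!: sum.cong)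
    ultimately show "w \<in> {w\<in>space M. \<epsilon> \<le> \<bar>mart_transform g n w\<bar>}" using w by simp
  qed measurable
  also have "\<dots> \<le> (\<Sum>i<n. \<integral>w. (g i w * \<xi> i w)\<^sup>2 \<partial>M) / \<epsilon>\<^sup>2"
    by (rule measure_mart_transform_ge[OF g_adapted g_bounded \<open>\<epsilon> > 0\<close>])
  also have "(\<Sum>i<n. \<integral>w. (g i w * \<xi> i w)\<^sup>2 \<partial>M) \<le> (\<Sum>i\<in>{m..<n}. \<integral>w. (u i w * \<xi> i w)\<^sup>2 \<partial>M)"
  proof -
    have "(\<Sum>i<n. \<integral>w. (g i w * \<xi> i w)\<^sup>2 \<partial>M)
        \<le> (\<Sum>i<n. if i \<in> {m..} then \<integral>w. (u i w * \<xi> i w)\<^sup>2 \<partial>M else 0)"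
    proof (intro sum_mono)
      fix i
      have "integrable M (\<lambda>w. (u i w * \<xi> i w)\<^sup>2)"
        using bounded by (rule integrable_weighted_\<xi>_square[rotated]) measurable
      then show "(\<integral>w. (g i w * \<xi> i w)\<^sup>2 \<partial>M) \<le> (if i \<in> {m..} then \<integral>w. (u i w * \<xi> i w)\<^sup>2 \<partial>M else 0)"
        by (auto simp: g_def alive_def intro!: integral_mono_AE' AE_I2)
    qed
    also have "\<dots> = (\<Sum>i\<in>{..<n} \<inter> {m..}. \<integral>w. (u i w * \<xi> i w)\<^sup>2 \<partial>M)"
      by (rule sum.inter_restrict[symmetric]) simp
    also have "\<dots> = (\<Sum>i\<in>{m..<n}. \<integral>w. (u i w * \<xi> i w)\<^sup>2 \<partial>M)"
      by (rule sum.cong) auto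
    finally show ?thesis .
  qed
  finally show ?thesis using \<open>\<epsilon> > 0\<close> by (simp add: divide_right_mono)
qed

lemma summable_integral_weighted_\<xi>_square:
  assumes adapted: "\<And>i. u i \<in> borel_measurable (F i)"
    and bounded: "\<And>i w. w \<in> space M \<Longrightarrow> \<bar>u i w\<bar> \<le> U"
    and square_sums: "\<And>n w. w \<in> space M \<Longrightarrow> (\<Sum>i<n. (u i w)\<^sup>2) \<le> K"
  shows "summable (\<lambda>i. \<integral>w. (u i w * \<xi> i w)\<^sup>2 \<partial>M)"
proof (rule summableI_nonneg_bounded[where x = "C\<^sup>2 * K"])
  note [measurable] = measurable_filtration_M[OF adapted]
  have integrable_u_square: "integrable M (\<lambda>w. (u i w)\<^sup>2)" for i
    using bounded by (intro integrable_bounded[where B = "U\<^sup>2"])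
      (auto simp flip: abs_le_square_iff intro: order.trans[OF _ abs_ge_self])
  fix n
  show "0 \<le> (\<integral>w. (u i w * \<xi> i w)\<^sup>2 \<partial>M)" for i by simp
  have "(\<Sum>i<n. \<integral>w. (u i w * \<xi> i w)\<^sup>2 \<partial>M) \<le> (\<Sum>i<n. \<integral>w. C\<^sup>2 * (u i w)\<^sup>2 \<partial>M)"
  proof (intro sum_mono integral_mono)
    fix i
    show "integrable M (\<lambda>w. (u i w * \<xi> i w)\<^sup>2)"
      using bounded by (rule integrable_weighted_\<xi>_square[rotated]) measurable
    show "integrable M (\<lambda>w. C\<^sup>2 * (u i w)\<^sup>2)" using integrable_u_square by simp
    show "(u i w * \<xi> i w)\<^sup>2 \<le> C\<^sup>2 * (u i w)\<^sup>2" if "w \<in> space M" for w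
      using \<xi>_bounded[OF that, of i] C_nonneg
      by (simp add: power_mult_distrib mult.commute mult_right_mono power2_le_iff_abs_le)
  qed
  also have "\<dots> = C\<^sup>2 * (\<integral>w. (\<Sum>i<n. (u i w)\<^sup>2) \<partial>M)"
    using integrable_u_square by (simp add: sum_distrib_left)
  also have "\<dots> \<le> C\<^sup>2 * K"
    using square_sums integrable_u_square
    by (intro mult_left_mono integral_le_const AE_I2) auto
  finally show "(\<Sum>i<n. \<integral>w. (u i w * \<xi> i w)\<^sup>2 \<partial>M) \<le> C\<^sup>2 * K" .
qed

lemma AE_eventually_mart_transform_oscillation_lt:
  assumes adapted: "\<And>i. u i \<in> borel_measurable (F i)"
    and bounded: "\<And>i w. w \<in> space M \<Longrightarrow> \<bar>u i w\<bar> \<le> U"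
    and summable: "summable (\<lambda>i. \<integral>w. (u i w * \<xi> i w)\<^sup>2 \<partial>M)" and "\<epsilon> > 0"
  shows "AE w in M. \<exists>m. \<forall>k\<ge>m. \<bar>mart_transform u k w - mart_transform u m w\<bar> < \<epsilon>"
proof -
  note [measurable] = measurable_filtration_M[OF mart_transform_measurable[OF adapted]]
  define E where "E i = (\<integral>w. (u i w * \<xi> i w)\<^sup>2 \<partial>M)" for i
  define tail where "tail m = (\<Sum>k. E (k + m))" for m
  define N where "N = {w\<in>space M. \<forall>m. \<exists>k\<ge>m. \<epsilon> \<le> \<bar>mart_transform u k w - mart_transform u m w\<bar>}"
  have "measure M N \<le> tail m / \<epsilon>\<^sup>2" for m
  proof -
    define X where "X j = {w\<in>space M. \<exists>k\<in>{m..m + j}. \<epsilon> \<le> \<bar>mart_transform u k w - mart_transform u m w\<bar>}"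
      for j
    have lim: "(\<lambda>j. measure M (X j)) \<longlonglongrightarrow> measure M (\<Union>j. X j)"
      by (rule finite_Lim_measure_incseq) (auto simp: X_def incseq_def)
    moreover have "measure M (X j) \<le> tail m / \<epsilon>\<^sup>2" for j
    proof -
      have "(\<Sum>i\<in>{m..<m + j}. E i) = (\<Sum>k<j. E (k + m))"
        by (rule sum.reindex_bij_witness[of _ "\<lambda>k. k + m" "\<lambda>i. i - m"]) auto
      also have "\<dots> \<le> tail m"
        unfolding tail_def E_def
        using summable_ignore_initial_segment[OF summable, of m] by (intro sum_le_suminf) auto
      finally show ?thesis
        using kolmogorov_maximal_inequality[OF adapted bounded \<open>\<epsilon> > 0\<close>, of m "m + j"] \<open>\<epsilon> > 0\<close>
        by (simp add: X_def E_def divide_right_mono order_trans)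
    qed
    ultimately have "measure M (\<Union>j. X j) \<le> tail m / \<epsilon>\<^sup>2" by (intro LIMSEQ_le_const2[OF lim]) auto
    moreover have "N \<subseteq> (\<Union>j. X j)"
      by (auto simp: N_def X_def) (metis add_diff_inverse_nat atLeastAtMost_iff le_refl not_le)
    moreover have "(\<Union>j. X j) \<in> sets M" unfolding X_def by measurable
    ultimately show ?thesis by (meson finite_measure_mono order_trans)
  qed
  moreover have "(\<lambda>m. tail m / \<epsilon>\<^sup>2) \<longlonglongrightarrow> 0"
    using tendsto_divide[OF suminf_exist_split2[OF summable] tendsto_const, of "\<epsilon>\<^sup>2"] \<open>\<epsilon> > 0\<close>
    by (simp add: tail_def E_def)
  ultimately have "measure M N \<le> 0" by (intro LIMSEQ_le_const) auto
  moreover have "N \<in> sets M" unfolding N_def by measurable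
  ultimately have "N \<in> null_sets M" by (simp add: emeasure_eq_measure null_sets_def measure_le_0_iff)
  then show ?thesis by (rule AE_I') (auto simp: N_def not_less)
qed

lemma AE_summable_weighted_\<xi>:
  assumes adapted: "\<And>i. u i \<in> borel_measurable (F i)"
    and bounded: "\<And>i w. w \<in> space M \<Longrightarrow> \<bar>u i w\<bar> \<le> U"
    and square_sums: "\<And>n w. w \<in> space M \<Longrightarrow> (\<Sum>i<n. (u i w)\<^sup>2) \<le> K"
  shows "AE w in M. summable (\<lambda>i. u i w * \<xi> i w)"
proof -
  have "AE w in M. \<forall>j::nat. \<exists>m. \<forall>k\<ge>m. \<bar>mart_transform u k w - mart_transform u m w\<bar> < 1 / Suc j"
    unfolding AE_all_countable
    by (intro allI AE_eventually_mart_transform_oscillation_lt[OF adapted bounded]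
        summable_integral_weighted_\<xi>_square[OF adapted bounded square_sums]) simp_all
  then show ?thesis
  proof eventually_elim
    case (elim w)
    have "Cauchy (\<lambda>n. mart_transform u n w)"
    proof (rule CauchyI)
      fix \<epsilon> :: real assume "\<epsilon> > 0"
      then obtain j :: nat where j: "1 / Suc j < \<epsilon> / 2"
        by (metis half_gt_zero nat_approx_posE)
      with elim obtain m where m: "\<And>k. k \<ge> m \<Longrightarrow> \<bar>mart_transform u k w - mart_transform u m w\<bar> < \<epsilon> / 2"
        by (meson less_trans)
      show "\<exists>N. \<forall>k\<ge>N. \<forall>l\<ge>N. norm (mart_transform u k w - mart_transform u l w) < \<epsilon>"
      proof (intro exI allI impI)
        fix k l assume "m \<le> k" "m \<le> l"
        then show "norm (mart_transform u k w - mart_transform u l w) < \<epsilon>"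
          using m[OF \<open>m \<le> k\<close>] m[OF \<open>m \<le> l\<close>] unfolding real_norm_def abs_less_iff by linarith
      qed
    qed
    then show ?case
      unfolding summable_iff_convergent Cauchy_convergent_iff[symmetric]
      by (simp add: mart_transform_def[abs_def])
  qed
qed

end

section \<open>The sampled iteration\<close>

lemma sum_truncated_le_min:
  fixes a :: "nat \<Rightarrow> real"
  assumes a_nonneg: "\<And>i. 0 \<le> a i" and "0 \<le> K"
  shows "(\<Sum>i<n. if (\<Sum>j\<le>i. a j) \<le> K then a i else 0) \<le> min K (\<Sum>i<n. a i)"
proof (induction n)
  case (Suc n)
  have "(\<Sum>j\<le>n. a j) = (\<Sum>i<n. a i) + a n" by (simp add: lessThan_Suc_atMost[symmetric])
  then show ?case using Suc.IH a_nonneg[of n] by auto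
qed (simp add: \<open>0 \<le> K\<close>)

locale q_learning_samples = prob_space M for M :: "'w measure" +
  fixes p :: "'s::finite \<Rightarrow> 'a::finite \<Rightarrow> 's \<Rightarrow> real" and r :: "'s \<Rightarrow> 'a \<Rightarrow> 's \<Rightarrow> real"
    and e :: 's and \<beta> :: real and \<eta> :: "nat \<Rightarrow> 'w \<Rightarrow> real"
    and S :: "nat \<Rightarrow> 'w \<Rightarrow> 's" and A :: "nat \<Rightarrow> 'w \<Rightarrow> 'a" and S' :: "nat \<Rightarrow> 'w \<Rightarrow> 's"
    and zmin zmax :: real
  assumes mdp: "transient_mdp p r e"
    and \<beta>_pos: "\<beta> > 0"
    and measurable_\<eta> [measurable]: "\<And>i. \<eta> i \<in> borel_measurable M"
    and measurable_S [measurable]: "\<And>i. S i \<in> measurable M (count_space UNIV)"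
    and measurable_A [measurable]: "\<And>i. A i \<in> measurable M (count_space UNIV)"
    and measurable_S' [measurable]: "\<And>i. S' i \<in> measurable M (count_space UNIV)"
    and \<eta>_nonneg: "\<And>i w. w \<in> space M \<Longrightarrow> 0 \<le> \<eta> i w"
    and cond_prob: "\<And>i s'. AE w in M.
      real_cond_exp M (hist_sigma M \<eta> S A S' i) (\<lambda>w. indicator {w. S' i w = s'} w) w
        = p (S i w) (A i w) s'"
    and sum_inf: "AE w in M. \<forall>s a.
      (\<Sum>i. ennreal (if (S i w, A i w) = (s, a) then \<eta> i w else 0)) = \<infinity>"
    and sum_sq: "AE w in M. \<forall>s a.
      (\<Sum>i. ennreal (if (S i w, A i w) = (s, a) then (\<eta> i w)\<^sup>2 else 0)) < \<infinity>"
    and z_bound: "AE w in M. \<forall>i. zit \<beta> r \<eta> S A S' i w \<in> {zmin..zmax}"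
begin

abbreviation F :: "nat \<Rightarrow> 'w measure" where
  "F i \<equiv> hist_sigma M \<eta> S A S' i"

abbreviation q :: "nat \<Rightarrow> 'w \<Rightarrow> 's \<Rightarrow> 'a \<Rightarrow> real" where
  "q \<equiv> qit \<beta> r \<eta> S A S'"

lemma space_F: "space (F i) = space M"
  by (simp add: hist_sigma_def space_measure_of_conv)

lemma sets_F: "sets (F i) = sigma_sets (space M)
    ({\<eta> l -` B \<inter> space M | l B. l \<le> i \<and> B \<in> sets borel}
      \<union> {S l -` B \<inter> space M | l B. l \<le> i}
      \<union> {A l -` B \<inter> space M | l B. l \<le> i}
      \<union> {S' l -` B \<inter> space M | l B. l < i})"
  unfolding hist_sigma_def by (rule sets_measure_of) auto

lemma measurable_F_\<eta>:
  assumes "l \<le> i" shows "\<eta> l \<in> borel_measurable (F i)"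
proof (rule measurableI)
  fix B :: "real set" assume "B \<in> sets borel"
  then have "\<eta> l -` B \<inter> space M \<in> {\<eta> l -` B \<inter> space M | l B. l \<le> i \<and> B \<in> sets borel}"
    using assms by blast
  then show "\<eta> l -` B \<inter> space (F i) \<in> sets (F i)"
    unfolding space_F sets_F by (rule sigma_sets.Basic[OF UnI1[OF UnI1[OF UnI1]]])
qed simp

lemma measurable_F_S:
  assumes "l \<le> i" shows "S l \<in> measurable (F i) (count_space UNIV)"
proof (rule measurableI)
  fix B :: "'s set"
  have "S l -` B \<inter> space M \<in> {S l -` B \<inter> space M | l B. l \<le> i}" using assms by blast
  then show "S l -` B \<inter> space (F i) \<in> sets (F i)"
    unfolding space_F sets_F by (rule sigma_sets.Basic[OF UnI1[OF UnI1[OF UnI2]]])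
qed simp

lemma measurable_F_A:
  assumes "l \<le> i" shows "A l \<in> measurable (F i) (count_space UNIV)"
proof (rule measurableI)
  fix B :: "'a set"
  have "A l -` B \<inter> space M \<in> {A l -` B \<inter> space M | l B. l \<le> i}" using assms by blast
  then show "A l -` B \<inter> space (F i) \<in> sets (F i)"
    unfolding space_F sets_F by (rule sigma_sets.Basic[OF UnI1[OF UnI2]])
qed simp

lemma measurable_F_S':
  assumes "l < i" shows "S' l \<in> measurable (F i) (count_space UNIV)"
proof (rule measurableI)
  fix B :: "'s set"
  have "S' l -` B \<inter> space M \<in> {S' l -` B \<inter> space M | l B. l < i}" using assms by blast
  then show "S' l -` B \<inter> space (F i) \<in> sets (F i)"
    unfolding space_F sets_F by (rule sigma_sets.Basic[OF UnI2])
qed simp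

lemma subalgebra_F: "subalgebra M (F i)"
  unfolding subalgebra_def space_F sets_F
proof (intro conjI refl sets.sigma_sets_subset Un_least subsetI)
  fix X
  show "X \<in> sets M" if "X \<in> {\<eta> l -` B \<inter> space M | l B. l \<le> i \<and> B \<in> sets borel}"
    using that measurable_sets[OF measurable_\<eta>] by auto
  show "X \<in> sets M" if "X \<in> {S l -` B \<inter> space M | l B. l \<le> i}"
    using that measurable_sets[OF measurable_S] by auto
  show "X \<in> sets M" if "X \<in> {A l -` B \<inter> space M | l B. l \<le> i}"
    using that measurable_sets[OF measurable_A] by auto
  show "X \<in> sets M" if "X \<in> {S' l -` B \<inter> space M | l B. l < i}"
    using that measurable_sets[OF measurable_S'] by auto
qed

lemma filtration_F:
  assumes "i \<le> j" shows "subalgebra (F j) (F i)"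
  unfolding subalgebra_def space_F sets_F
proof (intro conjI refl sigma_sets_mono' Un_mono subsetI)
  fix X
  show "X \<in> {\<eta> l -` B \<inter> space M | l B. l \<le> j \<and> B \<in> sets borel}"
    if "X \<in> {\<eta> l -` B \<inter> space M | l B. l \<le> i \<and> B \<in> sets borel}"
    using that assms by (blast intro: le_trans)
  show "X \<in> {S l -` B \<inter> space M | l B. l \<le> j}" if "X \<in> {S l -` B \<inter> space M | l B. l \<le> i}"
    using that assms by (blast intro: le_trans)
  show "X \<in> {A l -` B \<inter> space M | l B. l \<le> j}" if "X \<in> {A l -` B \<inter> space M | l B. l \<le> i}"
    using that assms by (blast intro: le_trans)
  show "X \<in> {S' l -` B \<inter> space M | l B. l < j}" if "X \<in> {S' l -` B \<inter> space M | l B. l < i}"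
    using that assms by (blast intro: less_le_trans)
qed

lemma measurable_F_mono: "f \<in> borel_measurable (F i) \<Longrightarrow> i \<le> j \<Longrightarrow> f \<in> borel_measurable (F j)"
  by (rule measurable_from_subalg[OF filtration_F])

lemma measurable_F_M: "f \<in> measurable (F i) N \<Longrightarrow> f \<in> measurable M N"
  by (rule measurable_from_subalg[OF subalgebra_F])

lemma q_measurable: "(\<lambda>w. q i w s a) \<in> borel_measurable (F i)"
proof (induction i arbitrary: s a)
  case (Suc i)
  note [measurable] = measurable_F_mono[OF Suc.IH] measurable_F_\<eta>[of i "Suc i"]
    measurable_F_S[of i "Suc i"] measurable_F_A[of i "Suc i"] measurable_F_S'[of i "Suc i"]
  show ?case unfolding qit.simps Let_def by measurable
qed simp

definition td :: "nat \<Rightarrow> 's \<Rightarrow> 'w \<Rightarrow> real" where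
  "td i s' w = r (S i w) (A i w) s' + Max (range (q i w s')) - q i w (S i w) (A i w)"

lemma zit_eq_td: "zit \<beta> r \<eta> S A S' i w = td i (S' i w) w"
  by (simp add: zit_def td_def Let_def)

lemma td_measurable: "td i s' \<in> borel_measurable (F i)"
proof -
  note [measurable] = q_measurable measurable_F_S[of i i] measurable_F_A[of i i]
  show ?thesis unfolding td_def[abs_def] by measurable
qed

lemma integrable_times_next_state:
  assumes [measurable]: "f \<in> borel_measurable M" and bounded: "\<And>w. w \<in> space M \<Longrightarrow> \<bar>f w\<bar> \<le> B"
  shows "integrable M (\<lambda>w. f w * p (S i w) (A i w) s')"
    and "integrable M (\<lambda>w. f w * indicator {w. S' i w = s'} w)"
proof -
  have B_nonneg: "0 \<le> B" using bounded not_empty by (meson abs_ge_zero equals0I order_trans)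
  show "integrable M (\<lambda>w. f w * p (S i w) (A i w) s')"
  proof (rule integrable_const_bound[where B = B])
    show "AE w in M. norm (f w * p (S i w) (A i w) s') \<le> B"
    proof (rule AE_I2)
      fix w assume "w \<in> space M"
      then have "\<bar>f w\<bar> * \<bar>p (S i w) (A i w) s'\<bar> \<le> B * 1"
        using bounded B_nonneg transient_mdp_nonneg[OF mdp] transient_mdp_le_one[OF mdp]
        by (intro mult_mono) auto
      then show "norm (f w * p (S i w) (A i w) s') \<le> B" by (simp add: abs_mult)
    qed
  qed measurable
  show "integrable M (\<lambda>w. f w * indicator {w. S' i w = s'} w)"
    using bounded B_nonneg
    by (intro integrable_const_bound[where B = B] AE_I2) (auto simp: indicator_def)
qed

lemma integral_next_state_indicator:
  assumes f: "f \<in> borel_measurable (F i)" and bounded: "\<And>w. w \<in> space M \<Longrightarrow> \<bar>f w\<bar> \<le> B"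
  shows "(\<integral>w. f w * indicator {w. S' i w = s'} w \<partial>M) = (\<integral>w. f w * p (S i w) (A i w) s' \<partial>M)"
proof -
  interpret sigma_finite_subalgebra M "F i"
    using subalgebra_F finite_measure_axioms
    by (intro finite_measure_subalgebra_is_sigma_finite) (simp add: finite_measure_subalgebra_def
        finite_measure_subalgebra_axioms_def)
  note [measurable] = measurable_F_M[OF f]
  have indicator_measurable [measurable]:
    "(\<lambda>w. indicator {w. S' i w = s'} w :: real) \<in> borel_measurable M"
    by measurable
  have "(\<integral>w. f w * indicator {w. S' i w = s'} w \<partial>M)
      = (\<integral>w. f w * real_cond_exp M (F i) (\<lambda>w. indicator {w. S' i w = s'} w) w \<partial>M)"
    by (rule real_cond_exp_intg(2)[OF integrable_times_next_state(2)[OF measurable_F_M[OF f] bounded]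
          f indicator_measurable, symmetric])
  also have "\<dots> = (\<integral>w. f w * p (S i w) (A i w) s' \<partial>M)"
    using cond_prob[of i s'] by (intro integral_cong_AE) (auto elim: eventually_mono)
  finally show ?thesis .
qed

lemma AE_next_state_iff:
  assumes E: "E \<in> sets (F i)"
  shows "(AE w in M. w \<in> E \<longrightarrow> S' i w \<noteq> s') \<longleftrightarrow> (AE w in M. w \<in> E \<longrightarrow> p (S i w) (A i w) s' = 0)"
proof -
  have [measurable]: "E \<in> sets M" using E subalgebra_F[of i] by (auto simp: subalgebra_def)
  have E_indicator: "(\<lambda>w. indicator E w :: real) \<in> borel_measurable (F i)"
    using E by simp
  have p_bounds: "0 \<le> p s a t" "p s a t \<le> 1" for s a t
    using transient_mdp_nonneg[OF mdp] transient_mdp_le_one[OF mdp] by auto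
  have integrable_next:
    "integrable M (\<lambda>w. indicator E w * indicator {w. S' i w = s'} w :: real)"
    by (rule integrable_times_next_state(2)[where B = 1]) (auto simp: indicator_def)
  have integrable_p: "integrable M (\<lambda>w. indicator E w * p (S i w) (A i w) s')"
    by (rule integrable_times_next_state(1)[where B = 1]) (auto simp: indicator_def)
  have same_integral: "(\<integral>w. indicator E w * indicator {w. S' i w = s'} w \<partial>M :: real)
      = (\<integral>w. indicator E w * p (S i w) (A i w) s' \<partial>M)"
    by (rule integral_next_state_indicator[OF E_indicator, where B = 1]) (simp add: indicator_def)
  have "(AE w in M. w \<in> E \<longrightarrow> S' i w \<noteq> s')
      \<longleftrightarrow> (AE w in M. indicator E w * indicator {w. S' i w = s'} w = (0::real))"
    by (intro AE_cong) (simp add: indicator_def)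
  also have "\<dots> \<longleftrightarrow> (\<integral>w. indicator E w * indicator {w. S' i w = s'} w \<partial>M) = (0::real)"
    using integral_nonneg_eq_0_iff_AE[OF integrable_next] by simp
  also have "\<dots> \<longleftrightarrow> (\<integral>w. indicator E w * p (S i w) (A i w) s' \<partial>M) = 0"
    by (simp add: same_integral)
  also have "\<dots> \<longleftrightarrow> (AE w in M. indicator E w * p (S i w) (A i w) s' = 0)"
    using p_bounds by (intro integral_nonneg_eq_0_iff_AE[OF integrable_p]) simp
  also have "\<dots> \<longleftrightarrow> (AE w in M. w \<in> E \<longrightarrow> p (S i w) (A i w) s' = 0)"
    by (intro AE_cong) (simp add: indicator_def)
  finally show ?thesis .
qed

lemma AE_next_state_possible: "AE w in M. \<forall>i. 0 < p (S i w) (A i w) (S' i w)"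
proof -
  have "AE w in M. p (S i w) (A i w) s' = 0 \<longrightarrow> S' i w \<noteq> s'" for i s'
  proof -
    define E where "E = {w\<in>space M. p (S i w) (A i w) s' = 0}"
    have E_F: "E \<in> sets (F i)"
    proof -
      note [measurable] = measurable_F_S[of i i] measurable_F_A[of i i]
      have "{w\<in>space (F i). p (S i w) (A i w) s' = 0} \<in> sets (F i)" by measurable
      then show ?thesis by (simp add: E_def space_F)
    qed
    then have "AE w in M. w \<in> E \<longrightarrow> S' i w \<noteq> s'"
      using AE_next_state_iff[OF E_F] by (simp add: E_def)
    with AE_space show ?thesis by eventually_elim (simp add: E_def)
  qed
  then have "AE w in M. \<forall>i s'. p (S i w) (A i w) s' = 0 \<longrightarrow> S' i w \<noteq> s'"
    by (simp add: AE_all_countable)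
  then show ?thesis
    by eventually_elim (metis order_le_less transient_mdp_nonneg[OF mdp])
qed

lemma AE_td_bounded_on_support:
  "AE w in M. \<forall>i s'. 0 < p (S i w) (A i w) s' \<longrightarrow> td i s' w \<in> {zmin..zmax}"
proof -
  have "AE w in M. td i s' w \<notin> {zmin..zmax} \<longrightarrow> p (S i w) (A i w) s' = 0" for i s'
  proof -
    define E where "E = {w\<in>space M. td i s' w \<notin> {zmin..zmax}}"
    have E_F: "E \<in> sets (F i)"
    proof -
      note [measurable] = td_measurable
      have "{w\<in>space (F i). td i s' w \<notin> {zmin..zmax}} \<in> sets (F i)" by measurable
      then show ?thesis by (simp add: E_def space_F)
    qed
    moreover have "AE w in M. w \<in> E \<longrightarrow> S' i w \<noteq> s'"
      using z_bound by eventually_elim (auto simp: E_def zit_eq_td)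
    ultimately have "AE w in M. w \<in> E \<longrightarrow> p (S i w) (A i w) s' = 0"
      using AE_next_state_iff[OF E_F] by blast
    with AE_space show ?thesis by eventually_elim (simp add: E_def)
  qed
  then have "AE w in M. \<forall>i s'. td i s' w \<notin> {zmin..zmax} \<longrightarrow> p (S i w) (A i w) s' = 0"
    by (simp add: AE_all_countable)
  then show ?thesis by eventually_elim (metis less_irrefl)
qed

text \<open>Clamping the TD error to \<open>[zmin, zmax]\<close> makes the noise bounded everywhere; by
  \<open>AE_td_bounded_on_support\<close> it changes nothing on almost every path.\<close>
definition exp_td :: "nat \<Rightarrow> 's \<Rightarrow> 'w \<Rightarrow> real" where
  "exp_td i s' w = exp (- \<beta> * max zmin (min zmax (td i s' w)))"

definition td_noise :: "nat \<Rightarrow> 'w \<Rightarrow> real" where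
  "td_noise i w = (\<Sum>s'\<in>UNIV. p (S i w) (A i w) s' * exp_td i s' w) - exp_td i (S' i w) w"

lemma exp_td_bounds: "0 < exp_td i s' w" "exp_td i s' w \<le> exp (- \<beta> * zmin)"
  using \<beta>_pos by (simp_all add: exp_td_def)

lemma exp_td_measurable: "exp_td i s' \<in> borel_measurable (F i)"
proof -
  note [measurable] = td_measurable
  show ?thesis unfolding exp_td_def[abs_def] by measurable
qed

lemma td_noise_measurable: "td_noise i \<in> borel_measurable (F (Suc i))"
proof -
  note [measurable] = measurable_F_mono[OF exp_td_measurable[of i], where j = "Suc i", simplified]
    measurable_F_S[of i "Suc i"] measurable_F_A[of i "Suc i"] measurable_F_S'[of i "Suc i"]
  show ?thesis unfolding td_noise_def[abs_def] by measurable
qed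

lemma td_noise_bounded: "\<bar>td_noise i w\<bar> \<le> exp (- \<beta> * zmin)"
proof -
  have "0 \<le> (\<Sum>s'\<in>UNIV. p (S i w) (A i w) s' * exp_td i s' w)"
    using exp_td_bounds(1)[THEN less_imp_le] transient_mdp_nonneg[OF mdp]
    by (intro sum_nonneg mult_nonneg_nonneg) auto
  moreover have "(\<Sum>s'\<in>UNIV. p (S i w) (A i w) s' * exp_td i s' w)
      \<le> (\<Sum>s'\<in>UNIV. p (S i w) (A i w) s' * exp (- \<beta> * zmin))"
    using exp_td_bounds transient_mdp_nonneg[OF mdp] by (intro sum_mono mult_left_mono) auto
  moreover have "(\<Sum>s'\<in>UNIV. p (S i w) (A i w) s' * exp (- \<beta> * zmin)) = exp (- \<beta> * zmin)"
    using transient_mdp_sum_one[OF mdp] by (simp flip: sum_distrib_right)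
  ultimately show ?thesis
    using exp_td_bounds[of i "S' i w" w] by (simp add: td_noise_def abs_le_iff)
qed

lemma td_noise_orthogonal:
  assumes g: "g \<in> borel_measurable (F i)" and g_bounded: "\<And>w. w \<in> space M \<Longrightarrow> \<bar>g w\<bar> \<le> B"
  shows "(\<integral>w. g w * td_noise i w \<partial>M) = 0"
proof -
  define f where "f s' w = g w * exp_td i s' w" for s' w
  have f_F: "f s' \<in> borel_measurable (F i)" for s'
    using g exp_td_measurable by (simp add: f_def[abs_def])
  have f_bounded: "\<bar>f s' w\<bar> \<le> B * exp (- \<beta> * zmin)" if "w \<in> space M" for s' w
    unfolding f_def abs_mult using g_bounded[OF that] exp_td_bounds[of i s' w]
    by (intro mult_mono) (auto intro: order.trans[OF abs_ge_zero])
  have "g w * td_noise i w = (\<Sum>s'\<in>UNIV. f s' w * p (S i w) (A i w) s'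
      - f s' w * indicator {w. S' i w = s'} w)" for w
  proof -
    have "(\<Sum>s'\<in>UNIV. f s' w * indicator {w. S' i w = s'} w)
        = (\<Sum>s'\<in>UNIV. if S' i w = s' then f s' w else 0)"
      by (intro sum.cong) (auto simp: indicator_def)
    then show ?thesis
      by (simp add: td_noise_def f_def sum_subtractf sum_distrib_left right_diff_distrib mult_ac)
  qed
  then have "(\<integral>w. g w * td_noise i w \<partial>M) = (\<integral>w. (\<Sum>s'\<in>UNIV. f s' w * p (S i w) (A i w) s'
      - f s' w * indicator {w. S' i w = s'} w) \<partial>M)"
    by simp
  also have "\<dots> = (\<Sum>s'\<in>UNIV. (\<integral>w. f s' w * p (S i w) (A i w) s' \<partial>M)
      - (\<integral>w. f s' w * indicator {w. S' i w = s'} w \<partial>M))"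
    using integrable_times_next_state[OF measurable_F_M[OF f_F] f_bounded]
    by (simp add: Bochner_Integration.integral_diff)
  also have "\<dots> = 0"
    using integral_next_state_indicator[OF f_F f_bounded] by simp
  finally show ?thesis .
qed

lemma bounded_mart_diff_td_noise: "bounded_mart_diff M F td_noise (exp (- \<beta> * zmin))"
proof (rule bounded_mart_diff.intro[OF prob_space_axioms bounded_mart_diff_axioms.intro])
  show "subalgebra M (F i)" for i by (rule subalgebra_F)
  show "subalgebra (F j) (F i)" if "i \<le> j" for i j using that by (rule filtration_F)
  show "td_noise i \<in> borel_measurable (F (Suc i))" for i by (rule td_noise_measurable)
  show "\<bar>td_noise i w\<bar> \<le> exp (- \<beta> * zmin)" for i w by (rule td_noise_bounded)
  show "(\<integral>w. g w * td_noise i w \<partial>M) = 0"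
    if "g \<in> borel_measurable (F i)" "\<And>w. w \<in> space M \<Longrightarrow> \<bar>g w\<bar> \<le> B" for i g B
    using that by (rule td_noise_orthogonal)
qed

definition visit_step :: "'s \<Rightarrow> 'a \<Rightarrow> nat \<Rightarrow> 'w \<Rightarrow> real" where
  "visit_step s a i w = (if (S i w, A i w) = (s, a) then \<eta> i w else 0)"

lemma AE_not_summable_visit_step: "AE w in M. \<forall>s a. \<not> summable (\<lambda>i. visit_step s a i w)"
  using sum_inf AE_space
proof eventually_elim
  case (elim w)
  show ?case
  proof (intro allI notI)
    fix s a assume "summable (\<lambda>i. visit_step s a i w)"
    then have "(\<Sum>i. ennreal (visit_step s a i w)) = ennreal (\<Sum>i. visit_step s a i w)"
      using \<eta>_nonneg[OF elim(2)] by (intro suminf_ennreal2) (auto simp: visit_step_def)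
    moreover have "(\<Sum>i. ennreal (visit_step s a i w)) = \<infinity>"
      using elim(1) by (simp add: visit_step_def if_distrib)
    ultimately show False by simp
  qed
qed

text \<open>Truncating the weights once their running square sum exceeds \<open>K\<close> keeps them adapted and
  bounds all square sums uniformly; each path with square-summable steps is covered by some \<open>K\<close>.\<close>
definition truncated_step :: "real \<Rightarrow> 's \<Rightarrow> 'a \<Rightarrow> nat \<Rightarrow> 'w \<Rightarrow> real" where
  "truncated_step K s a i w =
    (if (\<Sum>j\<le>i. (visit_step s a j w)\<^sup>2) \<le> K then visit_step s a i w else 0)"

lemma visit_step_measurable: "j \<le> i \<Longrightarrow> visit_step s a j \<in> borel_measurable (F i)"
proof -
  assume "j \<le> i"
  note [measurable] = measurable_F_\<eta>[OF this] measurable_F_S[OF this] measurable_F_A[OF this]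
  show ?thesis unfolding visit_step_def[abs_def] by measurable
qed

lemma truncated_step_measurable: "truncated_step K s a i \<in> borel_measurable (F i)"
proof -
  have [measurable]: "(\<lambda>w. \<Sum>j\<le>i. (visit_step s a j w)\<^sup>2) \<in> borel_measurable (F i)"
    using visit_step_measurable by (intro borel_measurable_sum borel_measurable_power) simp
  note [measurable] = visit_step_measurable[of i i]
  show ?thesis unfolding truncated_step_def[abs_def] by measurable
qed

lemma truncated_step_bounded:
  assumes "0 \<le> K" shows "\<bar>truncated_step K s a i w\<bar> \<le> sqrt K"
proof (cases "(\<Sum>j\<le>i. (visit_step s a j w)\<^sup>2) \<le> K")
  case True
  have "(visit_step s a i w)\<^sup>2 \<le> (\<Sum>j\<le>i. (visit_step s a j w)\<^sup>2)"
    by (rule member_le_sum) auto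
  with True show ?thesis
    by (simp add: truncated_step_def real_le_rsqrt)
qed (simp add: truncated_step_def assms)

lemma truncated_step_square_sums:
  assumes "0 \<le> K" shows "(\<Sum>i<n. (truncated_step K s a i w)\<^sup>2) \<le> K"
proof -
  have "(\<Sum>i<n. (truncated_step K s a i w)\<^sup>2)
      = (\<Sum>i<n. if (\<Sum>j\<le>i. (visit_step s a j w)\<^sup>2) \<le> K then (visit_step s a i w)\<^sup>2 else 0)"
    by (intro sum.cong) (simp_all add: truncated_step_def)
  also have "\<dots> \<le> K"
    using sum_truncated_le_min[of "\<lambda>j. (visit_step s a j w)\<^sup>2" K n] assms by simp
  finally show ?thesis .
qed

lemma AE_summable_visit_step_square: "AE w in M. \<forall>s a. summable (\<lambda>i. (visit_step s a i w)\<^sup>2)"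
  using sum_sq
proof eventually_elim
  case (elim w)
  show ?case
  proof (intro allI)
    fix s a
    have "(\<lambda>i. ennreal ((visit_step s a i w)\<^sup>2))
        = (\<lambda>i. ennreal (if (S i w, A i w) = (s, a) then (\<eta> i w)\<^sup>2 else 0))"
      by (simp add: visit_step_def fun_eq_iff)
    moreover have "(\<Sum>i. ennreal (if (S i w, A i w) = (s, a) then (\<eta> i w)\<^sup>2 else 0)) < \<infinity>"
      using elim by blast
    ultimately have "(\<Sum>i. ennreal ((visit_step s a i w)\<^sup>2)) \<noteq> \<top>" by simp
    then show "summable (\<lambda>i. (visit_step s a i w)\<^sup>2)"
      by (intro summable_suminf_not_top) auto
  qed
qed

lemma AE_summable_visit_noise: "AE w in M. \<forall>s a. summable (\<lambda>i. visit_step s a i w * td_noise i w)"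
proof -
  interpret bounded_mart_diff M F td_noise "exp (- \<beta> * zmin)"
    by (rule bounded_mart_diff_td_noise)
  have "AE w in M. summable (\<lambda>i. truncated_step (real K) s a i w * td_noise i w)" for K :: nat and s a
    by (rule AE_summable_weighted_\<xi>[OF truncated_step_measurable truncated_step_bounded
          truncated_step_square_sums]) simp_all
  then have "AE w in M. \<forall>(K::nat) s a. summable (\<lambda>i. truncated_step (real K) s a i w * td_noise i w)"
    by (simp add: AE_all_countable)
  with AE_summable_visit_step_square show ?thesis
  proof eventually_elim
    case (elim w)
    show ?case
    proof (intro allI)
      fix s a
      define K where "K = nat \<lceil>\<Sum>i. (visit_step s a i w)\<^sup>2\<rceil>"
      have "(\<Sum>j\<le>i. (visit_step s a j w)\<^sup>2) \<le> real K" for i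
        unfolding K_def using elim(1)
        by (intro order.trans[OF sum_le_suminf] real_nat_ceiling_ge) auto
      then have "truncated_step (real K) s a i w = visit_step s a i w" for i
        by (simp add: truncated_step_def)
      moreover have "summable (\<lambda>i. truncated_step (real K) s a i w * td_noise i w)"
        using elim(2) by blast
      ultimately show "summable (\<lambda>i. visit_step s a i w * td_noise i w)" by simp
    qed
  qed
qed

definition typical :: "'w \<Rightarrow> bool" where
  "typical w \<longleftrightarrow> w \<in> space M \<and>
    (\<forall>i s'. 0 < p (S i w) (A i w) s' \<longrightarrow> td i s' w \<in> {zmin..zmax}) \<and>
    (\<forall>i. 0 < p (S i w) (A i w) (S' i w)) \<and>
    (\<forall>s a. \<not> summable (\<lambda>i. visit_step s a i w)) \<and>
    (\<forall>s a. summable (\<lambda>i. (visit_step s a i w)\<^sup>2)) \<and>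
    (\<forall>s a. summable (\<lambda>i. visit_step s a i w * td_noise i w))"

lemma AE_typical: "AE w in M. typical w"
  using AE_space AE_td_bounded_on_support AE_next_state_possible AE_not_summable_visit_step
    AE_summable_visit_step_square AE_summable_visit_noise
  by eventually_elim (simp add: typical_def)

lemma typical_noise_eq:
  assumes "typical w"
  shows "exp (\<beta> * q i w (S i w) (A i w)) * return_mgf \<beta> p r (q i w) (S i w) (A i w)
      - exp (- \<beta> * zit \<beta> r \<eta> S A S' i w) = td_noise i w"
proof -
  have support: "0 < p (S i w) (A i w) s' \<Longrightarrow> td i s' w \<in> {zmin..zmax}" for s'
    using assms by (simp add: typical_def)
  have summand: "exp (\<beta> * q i w (S i w) (A i w))
      * (p (S i w) (A i w) s' * exp (- \<beta> * (r (S i w) (A i w) s' + Max (range (q i w s')))))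
      = p (S i w) (A i w) s' * exp_td i s' w" for s'
  proof (cases "0 < p (S i w) (A i w) s'")
    case True
    then show ?thesis
      using support[OF True] by (simp add: exp_td_def td_def algebra_simps flip: exp_add)
  next
    case False
    then show ?thesis using transient_mdp_nonneg[OF mdp, of "S i w" "A i w" s'] by simp
  qed
  then have "exp (\<beta> * q i w (S i w) (A i w)) * return_mgf \<beta> p r (q i w) (S i w) (A i w)
      = (\<Sum>s'\<in>UNIV. p (S i w) (A i w) s' * exp_td i s' w)"
    unfolding return_mgf_def sum_distrib_left by (rule sum.cong[OF refl])
  moreover have "exp (- \<beta> * zit \<beta> r \<eta> S A S' i w) = exp_td i (S' i w) w"
    using support assms by (simp add: typical_def zit_eq_td exp_td_def)
  ultimately show ?thesis by (simp add: td_noise_def)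
qed

lemma typical_path:
  assumes "typical w"
  shows "q_learning_path p r e \<beta> zmin zmax (\<lambda>i. q i w) (\<lambda>i. \<eta> i w) (\<lambda>i. S i w) (\<lambda>i. A i w)
    (\<lambda>i. S' i w) (\<lambda>i. zit \<beta> r \<eta> S A S' i w)"
proof
  have w: "w \<in> space M" using assms by (simp add: typical_def)
  show "transient_mdp p r e" by (rule mdp)
  show "\<beta> > 0" by (rule \<beta>_pos)
  show "q 0 w s a = 0" for s a by simp
  show "zit \<beta> r \<eta> S A S' i w = r (S i w) (A i w) (S' i w) + Max (range (q i w (S' i w)))
      - q i w (S i w) (A i w)" for i
    by (simp add: zit_def Let_def)
  show "q (Suc i) w s a = (if (s, a) = (S i w, A i w)
      then q i w s a - \<eta> i w * (exp (- \<beta> * zit \<beta> r \<eta> S A S' i w) - 1) else q i w s a)" for i s a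
    by (simp add: zit_def Let_def)
  show "0 \<le> \<eta> i w" for i by (rule \<eta>_nonneg[OF w])
  show "0 < p (S i w) (A i w) s' \<Longrightarrow>
      r (S i w) (A i w) s' + Max (range (q i w s')) - q i w (S i w) (A i w) \<in> {zmin..zmax}" for i s'
    using assms by (simp add: typical_def td_def)
  show "0 < p (S i w) (A i w) (S' i w)" for i using assms by (simp add: typical_def)
  show "\<not> summable (\<lambda>i. if (S i w, A i w) = (s, a) then \<eta> i w else 0)" for s a
    using assms by (simp add: typical_def visit_step_def)
  show "(\<lambda>i. if (S i w, A i w) = (s, a) then \<eta> i w else 0) \<longlonglongrightarrow> 0" for s a
  proof -
    have "(\<lambda>i. (visit_step s a i w)\<^sup>2) \<longlonglongrightarrow> 0"
      using assms by (intro summable_LIMSEQ_zero) (simp add: typical_def)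
    then have "(\<lambda>i. sqrt ((visit_step s a i w)\<^sup>2)) \<longlonglongrightarrow> 0"
      using tendsto_real_sqrt by fastforce
    moreover have "(\<lambda>i. sqrt ((visit_step s a i w)\<^sup>2)) = (\<lambda>i. visit_step s a i w)"
      using \<eta>_nonneg[OF w] by (simp add: visit_step_def fun_eq_iff)
    ultimately show ?thesis by (simp add: visit_step_def[abs_def])
  qed
  show "summable (\<lambda>i. if (S i w, A i w) = (s, a) then \<eta> i w * (exp (\<beta> * q i w (S i w) (A i w))
      * return_mgf \<beta> p r (q i w) (S i w) (A i w) - exp (- \<beta> * zit \<beta> r \<eta> S A S' i w)) else 0)" for s a
  proof -
    have "(\<lambda>i. if (S i w, A i w) = (s, a) then \<eta> i w * (exp (\<beta> * q i w (S i w) (A i w))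
        * return_mgf \<beta> p r (q i w) (S i w) (A i w) - exp (- \<beta> * zit \<beta> r \<eta> S A S' i w)) else 0)
        = (\<lambda>i. visit_step s a i w * td_noise i w)"
      by (simp add: fun_eq_iff visit_step_def flip: typical_noise_eq[OF assms])
    then show ?thesis using assms by (simp add: typical_def)
  qed
qed

theorem q_learning_converges:
  "\<exists>qinf. qinf = Bhat \<beta> p r qinf \<and> (AE w in M. \<forall>s a. (\<lambda>i. q i w s a) \<longlonglongrightarrow> qinf s a)"
proof -
  obtain w0 where "typical w0"
    using AE_typical by (metis AE_False eventually_mono)
  interpret path0: q_learning_path p r e \<beta> zmin zmax "\<lambda>i. q i w0" "\<lambda>i. \<eta> i w0" "\<lambda>i. S i w0"
    "\<lambda>i. A i w0" "\<lambda>i. S' i w0" "\<lambda>i. zit \<beta> r \<eta> S A S' i w0"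
    by (rule typical_path) fact
  show ?thesis
  proof (intro exI conjI)
    show "path0.q_sup = Bhat \<beta> p r path0.q_sup"
      using path0.q_sup_fixed_point by (simp add: fun_eq_iff Bhat_eq_soft_bellman[OF mdp \<beta>_pos])
    show "AE w in M. \<forall>s a. (\<lambda>i. q i w s a) \<longlonglongrightarrow> path0.q_sup s a"
      using AE_typical
    proof eventually_elim
      case (elim w)
      interpret path: q_learning_path p r e \<beta> zmin zmax "\<lambda>i. q i w" "\<lambda>i. \<eta> i w" "\<lambda>i. S i w"
        "\<lambda>i. A i w" "\<lambda>i. S' i w" "\<lambda>i. zit \<beta> r \<eta> S A S' i w"
        by (rule typical_path) fact
      have "path.q_sup = path0.q_sup"
        using soft_bellman_fixed_point_unique[OF mdp \<beta>_pos] path.q_sup_fixed_point path.q_sup_sink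
          path0.q_sup_fixed_point path0.q_sup_sink by blast
      then show ?case using path.q_tendsto_q_sup by simp
    qed
  qed
qed

end

theorem mainTheorem5:
  fixes M :: "'w measure"
    and p :: "'s::finite \<Rightarrow> 'a::finite \<Rightarrow> 's \<Rightarrow> real"
    and r :: "'s \<Rightarrow> 'a \<Rightarrow> 's \<Rightarrow> real"
    and e :: 's
    and \<beta> :: real
    and \<eta> :: "nat \<Rightarrow> 'w \<Rightarrow> real"
    and S :: "nat \<Rightarrow> 'w \<Rightarrow> 's" and A :: "nat \<Rightarrow> 'w \<Rightarrow> 'a" and S' :: "nat \<Rightarrow> 'w \<Rightarrow> 's"
    and zmin zmax :: real
  assumes "prob_space M"
    and mdp: "transient_mdp p r e"
    and beta_pos: "\<beta> > 0"
    and meas_eta: "\<And>i. \<eta> i \<in> borel_measurable M"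
    and meas_S: "\<And>i. S i \<in> measurable M (count_space UNIV)"
    and meas_A: "\<And>i. A i \<in> measurable M (count_space UNIV)"
    and meas_S': "\<And>i. S' i \<in> measurable M (count_space UNIV)"
    and eta_nonneg: "\<And>i w. w \<in> space M \<Longrightarrow> 0 \<le> \<eta> i w"
    and cond_prob: "\<And>i s'. AE w in M.
          real_cond_exp M (hist_sigma M \<eta> S A S' i)
            (\<lambda>w. indicator {w. S' i w = s'} w) w = p (S i w) (A i w) s'"
    and sum_inf: "AE w in M. \<forall>s a.
          (\<Sum>i. ennreal (if (S i w, A i w) = (s, a) then \<eta> i w else 0)) = \<infinity>"
    and sum_sq: "AE w in M. \<forall>s a.
          (\<Sum>i. ennreal (if (S i w, A i w) = (s, a) then (\<eta> i w)\<^sup>2 else 0)) < \<infinity>"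
    and zle: "zmin \<le> zmax"
    and z_bound: "AE w in M. \<forall>i. zit \<beta> r \<eta> S A S' i w \<in> {zmin..zmax}"
  shows "\<exists>qinf :: 's \<Rightarrow> 'a \<Rightarrow> real.
           qinf = Bhat \<beta> p r qinf \<and>
           (AE w in M. \<forall>s a. (\<lambda>i. qit \<beta> r \<eta> S A S' i w s a) \<longlonglongrightarrow> qinf s a)"
proof -
  interpret q_learning_samples M p r e \<beta> \<eta> S A S' zmin zmax
    using assms by (simp add: q_learning_samples_def q_learning_samples_axioms_def)
  show ?thesis by (rule q_learning_converges)
qed

end
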